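(* Let $\mathcal{F}$ be a finite set of algebraic-valued functions on Boolean variables, and let $\mathfrak{B}$ be its set of normalized binary functions. Assume: (i) $\mathfrak{B}$ is a finite group under matrix multiplication; (ii) every binary function realizable by a gadget of $\#\mathcal{F}$ is a (possibly zero) scalar multiple of a matrix in $\mathfrak{B}$; (iii) the four matrices $I=\begin{pmatrix}1&0\\0&1\end{pmatrix}$, $X=\begin{pmatrix}i&0\\0&-i\end{pmatrix}$, $Y=\begin{pmatrix}0&1\\-1&0\end{pmatrix}$, $Z=\begin{pmatrix}0&i\\i&0\end{pmatrix}$ belong to $\mathfrak{B}$; (iv) every arity-4 function realizable by a gadget of $\#\mathcal{F}$ has the form $(x_1,x_2,x_3,x_4)\mapsto \mu\, A(x_{\sigma(1)},x_{\sigma(2)})\,B(x_{\sigma(3)},x_{\sigma(4)})$ for some $\mu\in\mathbb{C}$, $A,B\in\mathfrak{B}$ and permutation $\sigma$ of $\{1,2,3,4\}$. Let $F$ be the function of any arity-$2d$ gadget of $\#\mathcal{F}$. Then for any ordered pairings $\pi,\pi'$ of the $2d$ variables and any maps $\psi,\psi':\{1,\dots,d\}\to K=\{I,X,Y,Z\}$, if $K^{\otimes\pi,\psi}F\neq 0$ then $\dfrac{K^{\otimes\pi',\psi'}F}{K^{\otimes\pi,\psi}F}$ is a real number.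
   Context: $\#\mathcal{F}$ takes as input a finite multigraph with each vertex $v$ assigned a function $F_v\in\mathcal{F}$ of arity $\deg(v)$ (with an ordering of incident edges; self-loops and multi-edges allowed) and outputs $\sum_{\sigma:E\to\{0,1\}}\prod_v F_v(\sigma|_{E(v)})$. A gadget is such a network that additionally has dangling edges $x_1,\dots,x_m$; its function is $(x_1,\dots,x_m)\mapsto\sum_{\sigma:E\to\{0,1\}}\prod_v F_v(\cdot)$ with the dangling edges fixed to the given values; a function is realizable if it is the function of some gadget. A binary function $f$ is identified with the $2\times2$ matrix $(f(u,v))_{u,v\in\{0,1\}}$. $\mathfrak{B}=\{A/s : A\text{ realizable binary}, \det A\neq0, s^2=\det A\}$ (both square roots). An ordered pairing $\pi$ is a bijection $\{1,\dots,2d\}\to\{x_1,\dots,x_{2d}\}$ viewed as the pairs $(\pi(2j-1),\pi(2j))$, $j=1,\dots,d$. For such $\pi$ and $\psi$, $K^{\otimes\pi,\psi}F=\sum_{x\in\{0,1\}^{2d}}F(x)\prod_{j=1}^d\psi(j)\big(x_{\pi(2j-1)},x_{\pi(2j)}\big)$, where $\psi(j)(u,v)$ is the $(u,v)$ entry of the matrix $\psi(j)$. *)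

theory Defs
  imports Complex_Main "HOL-Computational_Algebra.Polynomial"
    "HOL-Combinatorics.Permutations" "HOL-Algebra.Group"
begin

(* A signature: (arity, function); the function is only meaningful on
   Boolean lists of length = arity (entry x!i is the value of variable x_{i+1}). *)
type_synonym sig = "nat \<times> (bool list \<Rightarrow> complex)"

(* Edge labels: Inl i = dangling edge x_{i+1}; Inr e = internal edge e.
   A network/gadget is a finite list of vertices, each with its signature and
   the ordered list of its incident edge labels (self-loops: a label occurs twice
   in the same list; multi-edges: several distinct labels). *)
type_synonym gadget = "(sig \<times> (nat + nat) list) list"

definition all_labels :: "gadget \<Rightarrow> (nat + nat) list" where
  "all_labels G = concat (map snd G)"

definition wf_gadget :: "sig set \<Rightarrow> nat \<Rightarrow> gadget \<Rightarrow> bool" where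
  "wf_gadget \<F> m G \<longleftrightarrow>
     (\<forall>(f, es) \<in> set G. f \<in> \<F> \<and> length es = fst f) \<and>
     (\<forall>i < m. count_list (all_labels G) (Inl i) = 1) \<and>
     (\<forall>i. m \<le> i \<longrightarrow> count_list (all_labels G) (Inl i) = 0) \<and>
     (\<forall>e. count_list (all_labels G) (Inr e) = 0 \<or> count_list (all_labels G) (Inr e) = 2)"

definition internal_edges :: "gadget \<Rightarrow> nat set" where
  "internal_edges G = {e. Inr e \<in> set (all_labels G)}"

definition gadget_fun :: "gadget \<Rightarrow> bool list \<Rightarrow> complex" where
  "gadget_fun G x =
     (\<Sum>\<sigma> \<in> {\<sigma> :: nat \<Rightarrow> bool. \<forall>e. e \<notin> internal_edges G \<longrightarrow> \<sigma> e = False}.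
        prod_list (map (\<lambda>(f, es). snd f (map (\<lambda>l. case l of Inl i \<Rightarrow> x ! i | Inr e \<Rightarrow> \<sigma> e) es)) G))"

definition realizable :: "sig set \<Rightarrow> nat \<Rightarrow> (bool list \<Rightarrow> complex) \<Rightarrow> bool" where
  "realizable \<F> n f \<longleftrightarrow>
     (\<exists>G. wf_gadget \<F> n G \<and> (\<forall>x. length x = n \<longrightarrow> f x = gadget_fun G x))"

(* binary functions = 2x2 matrices, index 0 ~ False, 1 ~ True *)
type_synonym mat2 = "bool \<Rightarrow> bool \<Rightarrow> complex"

definition realizable_bin :: "sig set \<Rightarrow> mat2 \<Rightarrow> bool" where
  "realizable_bin \<F> A \<longleftrightarrow> realizable \<F> 2 (\<lambda>x. A (x ! 0) (x ! 1))"

definition mk2 :: "complex \<Rightarrow> complex \<Rightarrow> complex \<Rightarrow> complex \<Rightarrow> mat2" where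
  "mk2 a b c d = (\<lambda>u v. if \<not> u then (if \<not> v then a else b) else (if \<not> v then c else d))"

definition det2 :: "mat2 \<Rightarrow> complex" where
  "det2 A = A False False * A True True - A False True * A True False"

definition mmul2 :: "mat2 \<Rightarrow> mat2 \<Rightarrow> mat2" where
  "mmul2 A B = (\<lambda>u v. A u False * B False v + A u True * B True v)"

definition Imat :: mat2 where "Imat = mk2 1 0 0 1"
definition Xmat :: mat2 where "Xmat = mk2 \<i> 0 0 (- \<i>)"
definition Ymat :: mat2 where "Ymat = mk2 0 1 (-1) 0"
definition Zmat :: mat2 where "Zmat = mk2 0 \<i> \<i> 0"

definition Kset :: "mat2 set" where "Kset = {Imat, Xmat, Ymat, Zmat}"

definition Bfrak :: "sig set \<Rightarrow> mat2 set" where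
  "Bfrak \<F> = {(\<lambda>u v. A u v / s) | A s. realizable_bin \<F> A \<and> det2 A \<noteq> 0 \<and> s ^ 2 = det2 A}"

definition mat_monoid :: "mat2 set \<Rightarrow> mat2 monoid" where
  "mat_monoid S = \<lparr>carrier = S, mult = mmul2, one = Imat\<rparr>"

(* ordered pairing on variables indexed 0..2d-1: pairs (pi(2j), pi(2j+1)), j < d *)
definition ordered_pairing :: "nat \<Rightarrow> (nat \<Rightarrow> nat) \<Rightarrow> bool" where
  "ordered_pairing d \<pi> \<longleftrightarrow> bij_betw \<pi> {0..<2*d} {0..<2*d}"

definition Kcontract :: "nat \<Rightarrow> (nat \<Rightarrow> nat) \<Rightarrow> (nat \<Rightarrow> mat2) \<Rightarrow> (bool list \<Rightarrow> complex) \<Rightarrow> complex" where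
  "Kcontract d \<pi> \<psi> F =
     (\<Sum>x \<in> {x :: bool list. length x = 2*d}.
        F x * (\<Prod>j<d. \<psi> j (x ! \<pi> (2*j)) (x ! \<pi> (2*j+1))))"

end

(* A function f of the Boolean variables in V is twisted real if f (x') = (-1)^|x| * cnj (f x), where x'
   is x with the variables in V negated and |x| counts the variables in V that are true in x.  The
   matrices in K are quaternionic, so every K-contraction of a twisted-real function is real; hence it
   suffices that the gadget function F is a scalar multiple of a twisted-real function.

   This holds for every realizable function of an even number of variables, by induction on the number
   of variables.  For 2 and 4 variables it follows from the hypotheses: every element of the finite
   group B, and its product with each element of K, has finite order and determinant 1, hence real
   trace, and this makes it quaternionic.  For at least six variables, contracting a pair with an
   element of K gives a realizable function with fewer variables, which is twisted real up to a phase.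
   Contractions over disjoint pairs commute, so these phases agree whenever the double contraction is
   nonzero, and a three-qubit argument shows that F cannot split into parts of different phases. *)

theory Submission
  imports Defs "HOL-Algebra.Multiplicative_Group"
begin

section \<open>Contracting a pair of variables\<close>

type_synonym bfun = "(nat \<Rightarrow> bool) \<Rightarrow> complex"

definition pair_contract :: "nat \<Rightarrow> nat \<Rightarrow> mat2 \<Rightarrow> bfun \<Rightarrow> bfun" where
  "pair_contract p q k f x =
     k False False * f (x(p := False, q := False)) + k False True * f (x(p := False, q := True))
   + k True False * f (x(p := True, q := False)) + k True True * f (x(p := True, q := True))"

definition mat_dot :: "mat2 \<Rightarrow> mat2 \<Rightarrow> complex" where
  "mat_dot k' k = k' False False * k False False + k' False True * k False True
                + k' True False * k True False + k' True True * k True True"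

definition bell_part :: "nat \<Rightarrow> nat \<Rightarrow> mat2 \<Rightarrow> bfun \<Rightarrow> bfun" where
  "bell_part p q k f x = k (x p) (x q) / mat_dot k k * pair_contract p q k f x"

text \<open>Up to scalars, \<^const>\<open>Imat\<close>, \<^const>\<open>Xmat\<close>, \<^const>\<open>Ymat\<close>, \<^const>\<open>Zmat\<close> are the Bell
  states \<open>\<Phi>\<^sup>+, \<Phi>\<^sup>-, \<Psi>\<^sup>-, \<Psi>\<^sup>+\<close> on the pair of variables \<open>p, q\<close>: they are orthogonal for
  \<^const>\<open>mat_dot\<close>, and \<^const>\<open>bell_part\<close> is the projection onto one of them.\<close>

lemma K_entries [simp]:
  "Imat False False = 1" "Imat False True = 0" "Imat True False = 0" "Imat True True = 1"
  "Xmat False False = \<i>" "Xmat False True = 0" "Xmat True False = 0" "Xmat True True = - \<i>"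
  "Ymat False False = 0" "Ymat False True = 1" "Ymat True False = -1" "Ymat True True = 0"
  "Zmat False False = 0" "Zmat False True = \<i>" "Zmat True False = \<i>" "Zmat True True = 0"
  by (simp_all add: Imat_def Xmat_def Ymat_def Zmat_def mk2_def)

lemma K_distinct [simp]:
  "Imat \<noteq> Xmat" "Imat \<noteq> Ymat" "Imat \<noteq> Zmat" "Xmat \<noteq> Ymat" "Xmat \<noteq> Zmat" "Ymat \<noteq> Zmat"
  by (simp_all add: fun_eq_iff, (metis K_entries zero_neq_one complex_i_not_zero complex_i_not_one)+)

lemmas [simp] = K_distinct[symmetric]

lemma K_in_Kset [simp]: "Imat \<in> Kset" "Xmat \<in> Kset" "Ymat \<in> Kset" "Zmat \<in> Kset"
  by (simp_all add: Kset_def)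

lemma finite_Kset [simp]: "finite Kset"
  by (simp add: Kset_def)

lemma sum_Kset: "(\<Sum>k\<in>Kset. \<phi> k) = \<phi> Imat + \<phi> Xmat + \<phi> Ymat + \<phi> Zmat"
  by (simp add: Kset_def K_distinct[symmetric] algebra_simps)

lemma mat_dot_Kset:
  assumes "k \<in> Kset" "k' \<in> Kset"
  shows "mat_dot k' k = (if k' = k then mat_dot k k else 0)"
  using assms by (auto simp: Kset_def mat_dot_def)

lemma mat_dot_self_Kset: "k \<in> Kset \<Longrightarrow> mat_dot k k = 2 \<or> mat_dot k k = -2"
  by (auto simp: Kset_def mat_dot_def)

lemma pair_contract_upd: "p \<noteq> q \<Longrightarrow> pair_contract p q k f (x(p := u, q := v)) = pair_contract p q k f x"
  by (simp add: pair_contract_def fun_upd_twist)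

lemma bell_decomposition:
  assumes "p \<noteq> q"
  shows "f x = (\<Sum>k\<in>Kset. bell_part p q k f x)"
proof -
  have "f (y(p := u, q := v)) = (\<Sum>k\<in>Kset. bell_part p q k f (y(p := u, q := v)))" for y u v
    using assms by (cases u; cases v)
      (simp_all add: sum_Kset bell_part_def pair_contract_upd mat_dot_def,
       simp_all add: pair_contract_def field_simps)
  from this[of x "x p" "x q"] show ?thesis by simp
qed

lemma pair_contract_bell_part:
  assumes "p \<noteq> q" "k \<in> Kset" "k' \<in> Kset"
  shows "pair_contract p q k' (bell_part p q k f) x = (if k' = k then pair_contract p q k f x else 0)"
proof -
  have "pair_contract p q k' (bell_part p q k f) x = mat_dot k' k * pair_contract p q k f x / mat_dot k k"
    using assms(1) by (simp add: pair_contract_def[of p q k'] bell_part_def pair_contract_upd mat_dot_def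
        algebra_simps add_divide_distrib)
  then show ?thesis
    using mat_dot_Kset[OF assms(2,3)] mat_dot_self_Kset[OF assms(2)] by auto
qed

lemma pair_contract_commute:
  assumes "{a, b} \<inter> {c, e} = {}"
  shows "pair_contract a b k (pair_contract c e k' f) x = pair_contract c e k' (pair_contract a b k f) x"
  using assms by (simp add: pair_contract_def fun_upd_twist algebra_simps)

lemma pair_contract_bell_part_commute:
  assumes "{a, b} \<inter> {c, e} = {}"
  shows "pair_contract c e k' (bell_part a b k f) x = bell_part a b k (pair_contract c e k' f) x"
  using assms pair_contract_commute[OF assms, of k k' f x]
  by (simp add: pair_contract_def[of c e k'] bell_part_def algebra_simps)

lemma pair_contract_linear:
  "pair_contract p q k (\<lambda>x. f x + g x) x = pair_contract p q k f x + pair_contract p q k g x"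
  "pair_contract p q k (\<lambda>x. f x - g x) x = pair_contract p q k f x - pair_contract p q k g x"
  "pair_contract p q k (\<lambda>x. c * f x) x = c * pair_contract p q k f x"
  "pair_contract p q k (\<lambda>x. f x / c) x = pair_contract p q k f x / c"
  by (simp_all add: pair_contract_def algebra_simps add_divide_distrib diff_divide_distrib)

lemma pair_contract_sum:
  "pair_contract p q k (\<lambda>x. \<Sum>i\<in>I. g i x) x = (\<Sum>i\<in>I. pair_contract p q k (g i) x)"
  by (simp add: pair_contract_def sum.distrib sum_distrib_left)

lemma pair_contract_if:
  "pair_contract p q k (\<lambda>x. if P then f x else 0) x = (if P then pair_contract p q k f x else 0)"
  by (simp add: pair_contract_def)

lemma pair_contract_as_sum:
  "pair_contract p q k f x = (\<Sum>u\<in>UNIV. \<Sum>v\<in>UNIV. k u v * f (x(p := u, q := v)))"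
  by (simp add: pair_contract_def UNIV_bool algebra_simps)

lemma pair_contract_cong: "(\<And>x. f x = g x) \<Longrightarrow> pair_contract p q k f x = pair_contract p q k g x"
  by (simp add: pair_contract_def)

lemma zero_of_vanishing_contractions:
  assumes "p \<noteq> q" "\<forall>k\<in>Kset. \<forall>x. pair_contract p q k f x = 0"
  shows "f x = 0"
  using bell_decomposition[OF assms(1), of f x] assms(2) by (simp add: bell_part_def)

section \<open>Twisted reality\<close>

definition flip_on :: "nat set \<Rightarrow> (nat \<Rightarrow> bool) \<Rightarrow> nat \<Rightarrow> bool" where
  "flip_on V x = (\<lambda>i. if i \<in> V then \<not> x i else x i)"

definition weight :: "nat set \<Rightarrow> (nat \<Rightarrow> bool) \<Rightarrow> nat" where
  "weight V x = (\<Sum>i\<in>V. of_bool (x i))"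

definition twisted_real :: "nat set \<Rightarrow> bfun \<Rightarrow> bool" where
  "twisted_real V f \<longleftrightarrow> (\<forall>x. f (flip_on V x) = (-1) ^ weight V x * cnj (f x))"

definition twisted_real_multiple :: "nat set \<Rightarrow> bfun \<Rightarrow> bool" where
  "twisted_real_multiple V f \<longleftrightarrow> (\<exists>c. c \<noteq> 0 \<and> twisted_real V (\<lambda>x. f x / c))"

definition quaternionic :: "mat2 \<Rightarrow> bool" where
  "quaternionic k \<longleftrightarrow> k True True = cnj (k False False) \<and> k True False = - cnj (k False True)"

lemma quaternionic_flip:
  "quaternionic k \<Longrightarrow> k (\<not> u) (\<not> v) = (-1) ^ (of_bool u + of_bool v) * cnj (k u v)"
  by (cases u; cases v) (auto simp: quaternionic_def)

lemma quaternionic_Kset: "k \<in> Kset \<Longrightarrow> quaternionic k"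
  by (auto simp: Kset_def quaternionic_def)

lemma weight_remove_pair:
  assumes "finite V" "a \<in> V" "b \<in> V" "a \<noteq> b"
  shows "weight V x = weight (V - {a, b}) x + of_bool (x a) + of_bool (x b)"
proof -
  have "weight V x = weight (V - {a, b}) x + (\<Sum>i\<in>{a, b}. of_bool (x i))"
    using assms(1-3) sum.subset_diff[of "{a, b}" V] by (simp add: weight_def del: sum_of_bool_eq)
  then show ?thesis using assms(4) by simp
qed

lemma weight_upd: "a \<notin> W \<Longrightarrow> b \<notin> W \<Longrightarrow> weight W (x(a := u, b := v)) = weight W x"
  by (auto simp: weight_def intro!: sum.cong)

lemma twisted_real_cong: "twisted_real V f \<Longrightarrow> (\<And>x. f x = g x) \<Longrightarrow> twisted_real V g"
  by (simp add: twisted_real_def)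

lemma twisted_real_zero: "(\<And>x. f x = 0) \<Longrightarrow> twisted_real V f"
  by (simp add: twisted_real_def)

lemma twisted_real_add: "twisted_real V f \<Longrightarrow> twisted_real V g \<Longrightarrow> twisted_real V (\<lambda>x. f x + g x)"
  by (simp add: twisted_real_def algebra_simps)

lemma twisted_real_sum:
  "(\<And>i. i \<in> I \<Longrightarrow> twisted_real V (g i)) \<Longrightarrow> twisted_real V (\<lambda>x. \<Sum>i\<in>I. g i x)"
  by (induction I rule: infinite_finite_induct) (auto intro: twisted_real_add twisted_real_zero)

lemma twisted_real_real_mult: "r \<in> \<real> \<Longrightarrow> twisted_real V f \<Longrightarrow> twisted_real V (\<lambda>x. r * f x)"
  by (auto simp: twisted_real_def Reals_cnj_iff)

lemma twisted_real_contract: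
  assumes "finite V" "a \<in> V" "b \<in> V" "a \<noteq> b" "quaternionic k" "twisted_real V f"
  shows "twisted_real (V - {a, b}) (pair_contract a b k f)"
  unfolding twisted_real_def
proof
  fix x
  let ?w = "weight (V - {a, b}) x"
  have summand: "k u v * f ((flip_on (V - {a, b}) x)(a := u, b := v))
              = (-1) ^ ?w * cnj (k (\<not> u) (\<not> v) * f (x(a := \<not> u, b := \<not> v)))" for u v
  proof -
    have "(flip_on (V - {a, b}) x)(a := u, b := v) = flip_on V (x(a := \<not> u, b := \<not> v))"
      using assms(2-4) by (auto simp: flip_on_def fun_eq_iff)
    moreover have "weight V (x(a := \<not> u, b := \<not> v)) = ?w + of_bool (\<not> u) + of_bool (\<not> v)"
      using weight_remove_pair[OF assms(1-4)] weight_upd[of a "V - {a, b}" b] assms(4) by simp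
    ultimately have "f ((flip_on (V - {a, b}) x)(a := u, b := v))
        = (-1) ^ (?w + of_bool (\<not> u) + of_bool (\<not> v)) * cnj (f (x(a := \<not> u, b := \<not> v)))"
      using assms(6) by (simp add: twisted_real_def)
    moreover have "k u v = (-1) ^ (of_bool (\<not> u) + of_bool (\<not> v)) * cnj (k (\<not> u) (\<not> v))"
      using quaternionic_flip[OF assms(5), of "\<not> u" "\<not> v"] by simp
    ultimately show ?thesis by (simp add: power_add algebra_simps)
  qed
  show "pair_contract a b k f (flip_on (V - {a, b}) x) = (-1) ^ ?w * cnj (pair_contract a b k f x)"
    unfolding pair_contract_def summand by (simp add: algebra_simps)
qed

lemma twisted_real_bell_part:
  assumes "finite V" "a \<in> V" "b \<in> V" "a \<noteq> b" "k \<in> Kset"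
    and "twisted_real (V - {a, b}) (pair_contract a b k f)"
  shows "twisted_real V (bell_part a b k f)"
  unfolding twisted_real_def
proof
  fix x
  have "flip_on V x = (flip_on (V - {a, b}) x)(a := \<not> x a, b := \<not> x b)"
    using assms(2-4) by (auto simp: flip_on_def fun_eq_iff)
  then have "pair_contract a b k f (flip_on V x) = (-1) ^ weight (V - {a, b}) x * cnj (pair_contract a b k f x)"
    using assms(6) by (simp add: pair_contract_upd[OF assms(4)] twisted_real_def)
  moreover have "k (flip_on V x a) (flip_on V x b) = (-1) ^ (of_bool (x a) + of_bool (x b)) * cnj (k (x a) (x b))"
    using assms(2,3) quaternionic_flip[OF quaternionic_Kset[OF assms(5)]] by (simp add: flip_on_def)
  moreover have "cnj (mat_dot k k) = mat_dot k k"
    using mat_dot_self_Kset[OF assms(5)] by auto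
  ultimately show "bell_part a b k f (flip_on V x) = (-1) ^ weight V x * cnj (bell_part a b k f x)"
    by (simp add: bell_part_def weight_remove_pair[OF assms(1-4)] power_add)
qed

lemma twisted_real_ratio:
  assumes "twisted_real W (\<lambda>x. D x / c)" "twisted_real W (\<lambda>x. D x / c')"
    and "D x0 \<noteq> 0" "c \<noteq> 0" "c' \<noteq> 0"
  shows "c' / c \<in> \<real>"
proof -
  let ?y = "flip_on W x0"
  have "D ?y / c = (-1) ^ weight W x0 * cnj (D x0 / c)" "D ?y / c' = (-1) ^ weight W x0 * cnj (D x0 / c')"
    using assms(1,2) by (simp_all add: twisted_real_def)
  then have "c' / c = (D ?y / c) / (D ?y / c')" "cnj (c' / c) = cnj (D x0 / c) / cnj (D x0 / c')"
    using assms(3-5) by (auto simp: field_simps)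
  then have "c' / c = cnj (c' / c)"
    using \<open>D ?y / c = _\<close> \<open>D ?y / c' = _\<close> by simp
  then show ?thesis by (metis Reals_cnj_iff)
qed

lemma twisted_real_multiple_zero: "(\<And>x. f x = 0) \<Longrightarrow> twisted_real_multiple V f"
  unfolding twisted_real_multiple_def by (rule exI[of _ 1]) (simp add: twisted_real_def)

lemma twisted_real_multiple_scale:
  assumes "\<alpha> \<noteq> 0" "twisted_real_multiple V f"
  shows "twisted_real_multiple V (\<lambda>x. \<alpha> * f x)"
proof -
  obtain c where "c \<noteq> 0" "twisted_real V (\<lambda>x. f x / c)"
    using assms(2) by (auto simp: twisted_real_multiple_def)
  then show ?thesis
    unfolding twisted_real_multiple_def using assms(1)
    by (intro exI[of _ "\<alpha> * c"]) (auto elim: twisted_real_cong)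
qed

section \<open>Pair symmetries and the three-qubit lemma\<close>

definition flip_pair :: "nat \<Rightarrow> nat \<Rightarrow> (nat \<Rightarrow> bool) \<Rightarrow> nat \<Rightarrow> bool" where
  "flip_pair p q x = x(p := \<not> x p, q := \<not> x q)"

datatype pair_symmetry = Parity | Flip | Signed_Flip

fun pair_op :: "pair_symmetry \<Rightarrow> nat \<Rightarrow> nat \<Rightarrow> bfun \<Rightarrow> bfun" where
  "pair_op Parity p q h x = (if x p = x q then h x else - h x)"
| "pair_op Flip p q h x = h (flip_pair p q x)"
| "pair_op Signed_Flip p q h x = (if x p = x q then - h (flip_pair p q x) else h (flip_pair p q x))"

definition bool_sign :: "bool \<Rightarrow> complex" where
  "bool_sign s = (if s then 1 else -1)"

definition pair_eigen :: "pair_symmetry \<Rightarrow> nat \<Rightarrow> nat \<Rightarrow> bool \<Rightarrow> bfun \<Rightarrow> bool" where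
  "pair_eigen t p q s h \<longleftrightarrow> pair_op t p q h = (\<lambda>x. bool_sign s * h x)"

fun bell_class :: "pair_symmetry \<Rightarrow> bool \<Rightarrow> mat2 set" where
  "bell_class Parity True = {Imat, Xmat}"
| "bell_class Parity False = {Ymat, Zmat}"
| "bell_class Flip True = {Imat, Zmat}"
| "bell_class Flip False = {Xmat, Ymat}"
| "bell_class Signed_Flip True = {Xmat, Zmat}"
| "bell_class Signed_Flip False = {Imat, Ymat}"

text \<open>\<^term>\<open>pair_op Parity p q\<close>, \<^term>\<open>pair_op Flip p q\<close> and \<^term>\<open>pair_op Signed_Flip p q\<close> are the
  Pauli products \<open>Z\<otimes>Z\<close>, \<open>X\<otimes>X\<close> and \<open>Y\<otimes>Y\<close> on the variables \<open>p, q\<close>.  Their joint eigenvectors are the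
  Bell states, and \<^term>\<open>bell_class t s\<close> lists those on which \<open>t\<close> has eigenvalue \<^term>\<open>bool_sign s\<close>.\<close>

definition bell_support :: "nat \<Rightarrow> nat \<Rightarrow> bfun \<Rightarrow> mat2 set" where
  "bell_support p q h = {k \<in> Kset. \<exists>x. pair_contract p q k h x \<noteq> 0}"

lemma flip_pair_sym: "flip_pair p q = flip_pair q p"
  by (auto simp: flip_pair_def fun_eq_iff)

lemma pair_op_sym: "pair_op t p q = pair_op t q p"
  by (cases t) (auto simp: fun_eq_iff flip_pair_sym)

lemma pair_op_scale: "pair_op t p q (\<lambda>x. c * h x) = (\<lambda>x. c * pair_op t p q h x)"
  by (cases t) (auto simp: fun_eq_iff)

lemma pair_op_compose:
  assumes "p \<noteq> q" "p \<noteq> r" "q \<noteq> r"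
  shows "pair_op t q r h = pair_op t p q (pair_op t p r h)"
  using assms by (cases t) (auto simp: fun_eq_iff flip_pair_def fun_upd_twist fun_upd_idem)

lemma pair_op_anticommute:
  assumes "p \<noteq> q" "p \<noteq> r" "q \<noteq> r" "t \<noteq> t'"
  shows "pair_op t p q (pair_op t' p r h) = - pair_op t' p r (pair_op t p q h)"
  using assms by (cases t; cases t') (auto simp: fun_eq_iff flip_pair_def fun_upd_twist)

lemma pair_eigen_sym: "pair_eigen t p q s h = pair_eigen t q p s h"
  by (simp add: pair_eigen_def pair_op_sym)

lemma pair_eigen_compose:
  assumes "p \<noteq> q" "p \<noteq> r" "q \<noteq> r" "pair_eigen t p q s1 h" "pair_eigen t p r s2 h"
  shows "pair_eigen t q r (s1 = s2) h"
  using assms pair_op_compose[OF assms(1-3), of t h]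
  by (simp add: pair_eigen_def pair_op_scale bool_sign_def)

lemma pair_eigen_anticommute:
  assumes "p \<noteq> q" "p \<noteq> r" "q \<noteq> r" "t \<noteq> t'" "pair_eigen t p q s h" "pair_eigen t' p r s' h"
  shows "h x = 0"
proof -
  have "bool_sign s * bool_sign s' * h x = - (bool_sign s * bool_sign s' * h x)"
    using fun_cong[OF pair_op_anticommute[OF assms(1-4), of h], of x] assms(5,6)
    by (simp add: pair_eigen_def pair_op_scale algebra_simps)
  then show ?thesis by (simp add: bool_sign_def split: if_splits)
qed

definition bell_eigenvalue :: "pair_symmetry \<Rightarrow> mat2 \<Rightarrow> complex" where
  "bell_eigenvalue t k = bool_sign (k \<in> bell_class t True)"

lemma bell_class_False: "bell_class t False = Kset - bell_class t True"
  by (cases t) (auto simp: Kset_def)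

lemma mem_bell_class_iff: "k \<in> Kset \<Longrightarrow> k \<in> bell_class t s \<longleftrightarrow> (k \<in> bell_class t True \<longleftrightarrow> s)"
  by (cases s) (simp_all add: bell_class_False)

lemma Kset_pair_symmetries:
  assumes "k \<in> Kset"
  shows "(if u = v then 1 else -1) * k u v = bell_eigenvalue Parity k * k u v"
    and "k (\<not> u) (\<not> v) = bell_eigenvalue Flip k * k u v"
    and "(if u = v then -1 else 1) * k (\<not> u) (\<not> v) = bell_eigenvalue Signed_Flip k * k u v"
  using assms by (cases u; cases v; auto simp: Kset_def bell_eigenvalue_def bool_sign_def)+

lemma pair_op_bell_part:
  assumes "p \<noteq> q" "k \<in> Kset"
  shows "pair_op t p q (bell_part p q k h) x = bell_eigenvalue t k * bell_part p q k h x"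
proof -
  have flip: "pair_contract p q k h (flip_pair p q x) = pair_contract p q k h x"
    "flip_pair p q x p = (\<not> x p)" "flip_pair p q x q = (\<not> x q)"
    using assms(1) by (simp_all add: flip_pair_def pair_contract_upd)
  show ?thesis
  proof (cases t)
    case Parity
    have "pair_op t p q (bell_part p q k h) x
        = (if x p = x q then 1 else -1) * k (x p) (x q) * (pair_contract p q k h x / mat_dot k k)"
      using Parity by (simp add: bell_part_def)
    also have "\<dots> = bell_eigenvalue t k * bell_part p q k h x"
      by (subst Kset_pair_symmetries(1)[OF assms(2)]) (simp add: Parity bell_part_def)
    finally show ?thesis .
  next
    case Flip
    then show ?thesis
      using Kset_pair_symmetries(2)[OF assms(2), of "x p" "x q"] by (simp add: bell_part_def flip)
  next
    case Signed_Flip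
    have "pair_op t p q (bell_part p q k h) x
        = (if x p = x q then -1 else 1) * k (\<not> x p) (\<not> x q) * (pair_contract p q k h x / mat_dot k k)"
      using Signed_Flip by (simp add: bell_part_def flip)
    also have "\<dots> = bell_eigenvalue t k * bell_part p q k h x"
      by (subst Kset_pair_symmetries(3)[OF assms(2)]) (simp add: Signed_Flip bell_part_def)
    finally show ?thesis .
  qed
qed

lemma pair_op_sum: "pair_op t p q (\<lambda>x. \<Sum>i\<in>I. g i x) x = (\<Sum>i\<in>I. pair_op t p q (g i) x)"
  by (cases t) (simp_all add: sum_negf)

lemma pair_op_bell_decomposition:
  assumes "p \<noteq> q"
  shows "pair_op t p q h x = (\<Sum>k\<in>Kset. bell_eigenvalue t k * bell_part p q k h x)"
proof -
  have "pair_op t p q h x = pair_op t p q (\<lambda>x. \<Sum>k\<in>Kset. bell_part p q k h x) x"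
    by (metis bell_decomposition[OF assms])
  then show ?thesis by (simp add: pair_op_sum pair_op_bell_part[OF assms] cong: sum.cong)
qed

lemma contract_pair_op:
  assumes "p \<noteq> q" "k \<in> Kset"
  shows "pair_contract p q k (pair_op t p q h) x = bell_eigenvalue t k * pair_contract p q k h x"
proof -
  have "pair_op t p q h = (\<lambda>x. \<Sum>k'\<in>Kset. bell_eigenvalue t k' * bell_part p q k' h x)"
    using pair_op_bell_decomposition[OF assms(1)] by blast
  then have "pair_contract p q k (pair_op t p q h) x
      = (\<Sum>k'\<in>Kset. bell_eigenvalue t k' * pair_contract p q k (bell_part p q k' h) x)"
    by (simp only: pair_contract_sum pair_contract_linear(3))
  also have "\<dots> = (\<Sum>k'\<in>Kset. if k' = k then bell_eigenvalue t k * pair_contract p q k h x else 0)"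
    by (rule sum.cong) (auto simp: pair_contract_bell_part assms)
  also have "\<dots> = bell_eigenvalue t k * pair_contract p q k h x"
    using assms(2) by simp
  finally show ?thesis .
qed

lemma bell_support_subset_iff:
  assumes "p \<noteq> q"
  shows "bell_support p q h \<subseteq> bell_class t s \<longleftrightarrow> pair_eigen t p q s h"
proof
  assume supp: "bell_support p q h \<subseteq> bell_class t s"
  have parts: "bell_eigenvalue t k * bell_part p q k h x = bool_sign s * bell_part p q k h x"
    if "k \<in> Kset" for k x
  proof (cases "k \<in> bell_support p q h")
    case True
    then have "k \<in> bell_class t True \<longleftrightarrow> s" using supp that mem_bell_class_iff by blast
    then show ?thesis by (simp add: bell_eigenvalue_def)
  next
    case False
    then show ?thesis using that by (simp add: bell_support_def bell_part_def)
  qed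
  show "pair_eigen t p q s h"
    unfolding pair_eigen_def fun_eq_iff
  proof
    fix x
    have "pair_op t p q h x = (\<Sum>k\<in>Kset. bool_sign s * bell_part p q k h x)"
      unfolding pair_op_bell_decomposition[OF assms] by (rule sum.cong) (simp_all add: parts)
    also have "\<dots> = bool_sign s * h x"
      by (simp add: sum_distrib_left[symmetric] bell_decomposition[OF assms, of h x, symmetric])
    finally show "pair_op t p q h x = bool_sign s * h x" .
  qed
next
  assume eig: "pair_eigen t p q s h"
  show "bell_support p q h \<subseteq> bell_class t s"
  proof
    fix k assume "k \<in> bell_support p q h"
    then obtain x where k: "k \<in> Kset" and nz: "pair_contract p q k h x \<noteq> 0"
      by (auto simp: bell_support_def)
    have "bell_eigenvalue t k = bool_sign s"
      using contract_pair_op[OF assms k, of t h x] eig nz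
      by (auto simp: pair_eigen_def pair_contract_linear)
    then have "k \<in> bell_class t True \<longleftrightarrow> s"
      by (simp add: bell_eigenvalue_def bool_sign_def split: if_splits)
    then show "k \<in> bell_class t s" using mem_bell_class_iff[OF k] by blast
  qed
qed

lemma card_Kset: "card Kset = 4"
  by (simp add: Kset_def)

lemma bell_class_subset_Kset: "bell_class t s \<subseteq> Kset"
  by (cases t; cases s) (auto simp: Kset_def)

lemma bell_class_complement: "bell_class t (\<not> s) = Kset - bell_class t s"
  by (cases s) (auto simp: bell_class_False dest: subsetD[OF bell_class_subset_Kset])

lemma two_element_bell_class:
  assumes "k \<in> Kset" "k' \<in> Kset" "k \<noteq> k'"
  shows "\<exists>t s. bell_class t s = {k, k'}"
  using assms unfolding Kset_def
  by (auto; metis bell_class.simps insert_commute)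

lemma disjoint_subsets_Kset_cases:
  assumes "S \<subseteq> Kset" "T \<subseteq> Kset" "S \<inter> T = {}"
  shows "(\<exists>k. S \<subseteq> {k}) \<or> (\<exists>k. T \<subseteq> {k}) \<or> (\<exists>t s. S \<subseteq> bell_class t s \<and> T \<subseteq> bell_class t (\<not> s))"
proof (rule ccontr)
  have two: "\<exists>k1 k2. k1 \<in> A \<and> k2 \<in> A \<and> k1 \<noteq> k2" if nonsingle: "\<forall>k. \<not> A \<subseteq> {k}" for A :: "mat2 set"
  proof -
    obtain k1 where "k1 \<in> A" using nonsingle by blast
    moreover obtain k2 where "k2 \<in> A" "k2 \<noteq> k1" using nonsingle by blast
    ultimately show ?thesis by blast
  qed
  assume "\<not> ?thesis"
  then have no_class: "\<not> (\<exists>t s. S \<subseteq> bell_class t s \<and> T \<subseteq> bell_class t (\<not> s))"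
    and "\<forall>k. \<not> S \<subseteq> {k}" "\<forall>k. \<not> T \<subseteq> {k}"
    by blast+
  then obtain k1 k2 k3 k4 where S: "k1 \<in> S" "k2 \<in> S" "k1 \<noteq> k2" and T: "k3 \<in> T" "k4 \<in> T" "k3 \<noteq> k4"
    using two by meson
  obtain t s where ts: "bell_class t s = {k1, k2}"
    using two_element_bell_class S assms(1) by blast
  have "k1 \<noteq> k3" "k1 \<noteq> k4" "k2 \<noteq> k3" "k2 \<noteq> k4"
    using S T assms(3) by auto
  then have K: "Kset = {k1, k2, k3, k4}"
    using S T assms(1,2) by (intro card_subset_eq[symmetric]) (auto simp: card_Kset)
  have "S \<subseteq> bell_class t s"
    using assms(1,3) T unfolding ts K by auto
  moreover have "T \<subseteq> bell_class t (\<not> s)"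
    using assms(2,3) S \<open>k1 \<noteq> k3\<close> \<open>k1 \<noteq> k4\<close> \<open>k2 \<noteq> k3\<close> \<open>k2 \<noteq> k4\<close>
    unfolding bell_class_complement ts K by auto
  ultimately show False using no_class by blast
qed

lemma disjoint_bell_supports_cases:
  assumes "p \<noteq> q" "bell_support p q f \<inter> bell_support p q g = {}"
  shows "(\<forall>t. \<exists>s. pair_eigen t p q s f) \<or> (\<forall>t. \<exists>s. pair_eigen t p q s g)
       \<or> (\<exists>t s. pair_eigen t p q s f \<and> pair_eigen t p q (\<not> s) g)"
proof -
  have subsingleton: "\<exists>s. pair_eigen t p q s h" if "bell_support p q h \<subseteq> {k}" for h k t
  proof -
    have "bell_support p q h \<subseteq> Kset"
      by (auto simp: bell_support_def)
    then have "bell_support p q h \<subseteq> bell_class t True \<or> bell_support p q h \<subseteq> bell_class t False"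
      using that unfolding bell_class_False by blast
    then show ?thesis using bell_support_subset_iff[OF assms(1)] by blast
  qed
  have "bell_support p q f \<subseteq> Kset" "bell_support p q g \<subseteq> Kset"
    by (auto simp: bell_support_def)
  from disjoint_subsets_Kset_cases[OF this assms(2)] consider
      (f_small) k where "bell_support p q f \<subseteq> {k}"
    | (g_small) k where "bell_support p q g \<subseteq> {k}"
    | (opposite) t s where "bell_support p q f \<subseteq> bell_class t s" "bell_support p q g \<subseteq> bell_class t (\<not> s)"
    by blast
  then show ?thesis
  proof cases
    case f_small
    then show ?thesis using subsingleton by blast
  next
    case g_small
    then show ?thesis using subsingleton by blast
  next
    case opposite
    then show ?thesis using bell_support_subset_iff[OF assms(1)] by blast
  qed
qed

lemma pair_eigen_sign_unique:
  assumes "pair_eigen t p q s h" "pair_eigen t p q s' h" "h x \<noteq> 0"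
  shows "s = s'"
proof -
  have "(\<lambda>x. bool_sign s * h x) = (\<lambda>x. bool_sign s' * h x)"
    using assms(1,2) by (simp add: pair_eigen_def)
  then have "bool_sign s * h x = bool_sign s' * h x"
    using fun_cong[of _ _ x] by fastforce
  then show ?thesis
    using assms(3) by (simp add: bool_sign_def split: if_splits)
qed

lemma pair_eigen_beside_full_symmetry:
  assumes "p \<noteq> q" "p \<noteq> r" "q \<noteq> r" "h x \<noteq> 0" "\<forall>t. \<exists>s. pair_eigen t p q s h"
  shows "\<not> pair_eigen t' p r s' h"
proof
  assume eig: "pair_eigen t' p r s' h"
  obtain t where "t \<noteq> t'" by (metis pair_symmetry.distinct(1))
  with assms eig pair_eigen_anticommute show False by blast
qed

lemma pair_eigen_same_symmetry:
  assumes "p \<noteq> q" "p \<noteq> r" "q \<noteq> r" "pair_eigen t p q s h" "pair_eigen t' p r s' h" "h x \<noteq> 0"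
  shows "t = t'"
  using pair_eigen_anticommute[OF assms(1-3) _ assms(4,5)] assms(6) by blast

lemma pair_contract_swap: "p \<noteq> q \<Longrightarrow> pair_contract q p k h x = pair_contract p q (\<lambda>u v. k v u) h x"
  by (simp add: pair_contract_def fun_upd_twist algebra_simps)

lemma Kset_transpose: "k \<in> Kset \<Longrightarrow> (\<lambda>u v. k v u) = k \<or> (\<lambda>u v. k v u) = (\<lambda>u v. - k u v)"
  unfolding Kset_def fun_eq_iff all_bool_eq by auto

lemma pair_contract_swap_vanish:
  assumes "p \<noteq> q" "k \<in> Kset"
  shows "pair_contract q p k h x = 0 \<longleftrightarrow> pair_contract p q k h x = 0"
  using Kset_transpose[OF assms(2)]
proof
  assume "(\<lambda>u v. k v u) = k"
  then show ?thesis by (simp add: pair_contract_swap[OF assms(1)])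
next
  assume "(\<lambda>u v. k v u) = (\<lambda>u v. - k u v)"
  moreover have "pair_contract p q (\<lambda>u v. - k u v) h x = - pair_contract p q k h x"
    by (simp add: pair_contract_def algebra_simps)
  ultimately show ?thesis by (simp add: pair_contract_swap[OF assms(1)])
qed

lemma bell_support_sym: "p \<noteq> q \<Longrightarrow> bell_support q p h = bell_support p q h"
  by (auto simp: bell_support_def pair_contract_swap_vanish)

lemma full_symmetry_excluded:
  assumes distinct: "p \<noteq> q" "p \<noteq> r" "q \<noteq> r" and nonzero: "h1 x1 \<noteq> 0" "h2 x2 \<noteq> 0"
    and full: "\<forall>t. \<exists>s. pair_eigen t p q s h1"
    and disjoint: "bell_support p r h1 \<inter> bell_support p r h2 = {}"
      "bell_support q r h1 \<inter> bell_support q r h2 = {}"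
  shows False
proof -
  have h1_pr: "\<not> pair_eigen t p r s h1" for t s
    using pair_eigen_beside_full_symmetry[OF distinct nonzero(1) full] .
  have h1_qr: "\<not> pair_eigen t q r s h1" for t s
    using pair_eigen_beside_full_symmetry[of q p r h1 x1] distinct nonzero(1) full
    by (simp add: pair_eigen_sym[of _ p q])
  have "\<forall>t. \<exists>s. pair_eigen t r p s h2"
    using disjoint_bell_supports_cases[OF distinct(2) disjoint(1)] h1_pr
    by (simp add: pair_eigen_sym[of _ p r])
  then have h2_qr: "\<not> pair_eigen t q r s h2" for t s
    using pair_eigen_beside_full_symmetry[of r p q h2 x2] distinct nonzero(2)
    by (simp add: pair_eigen_sym[of _ r q])
  show False
    using disjoint_bell_supports_cases[OF distinct(3) disjoint(2)] h1_qr h2_qr by blast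
qed

lemma no_full_symmetry_on_three_pairs:
  assumes distinct: "a \<noteq> b" "a \<noteq> c" "b \<noteq> c" and nonzero: "f xf \<noteq> 0" "g xg \<noteq> 0"
    and disjoint: "bell_support a b f \<inter> bell_support a b g = {}"
      "bell_support a c f \<inter> bell_support a c g = {}"
      "bell_support b c f \<inter> bell_support b c g = {}"
  shows "\<not> (\<forall>t. \<exists>s. pair_eigen t a b s f)" "\<not> (\<forall>t. \<exists>s. pair_eigen t a b s g)"
    and "\<not> (\<forall>t. \<exists>s. pair_eigen t a c s f)" "\<not> (\<forall>t. \<exists>s. pair_eigen t a c s g)"
    and "\<not> (\<forall>t. \<exists>s. pair_eigen t b c s f)" "\<not> (\<forall>t. \<exists>s. pair_eigen t b c s g)"
proof -
  have swap: "bell_support p q g \<inter> bell_support p q f = {}"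
    if "bell_support p q f \<inter> bell_support p q g = {}" for p q
    using that by blast
  have rev: "bell_support q p h \<inter> bell_support q p h' = {}"
    if "bell_support p q h \<inter> bell_support p q h' = {}" "p \<noteq> q" for p q h h'
    using that by (simp add: bell_support_sym)
  show "\<not> (\<forall>t. \<exists>s. pair_eigen t a b s f)" "\<not> (\<forall>t. \<exists>s. pair_eigen t a b s g)"
    using full_symmetry_excluded[OF distinct nonzero(1,2) _ disjoint(2,3)]
      full_symmetry_excluded[OF distinct nonzero(2,1) _ swap[OF disjoint(2)] swap[OF disjoint(3)]]
    by blast+
  show "\<not> (\<forall>t. \<exists>s. pair_eigen t a c s f)" "\<not> (\<forall>t. \<exists>s. pair_eigen t a c s g)"
    using full_symmetry_excluded[of a c b, OF _ _ _ nonzero(1,2) _ disjoint(1) rev[OF disjoint(3)]]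
      full_symmetry_excluded[of a c b, OF _ _ _ nonzero(2,1) _ swap[OF disjoint(1)] rev[OF swap[OF disjoint(3)]]]
      distinct by blast+
  show "\<not> (\<forall>t. \<exists>s. pair_eigen t b c s f)" "\<not> (\<forall>t. \<exists>s. pair_eigen t b c s g)"
    using full_symmetry_excluded[of b c a, OF _ _ _ nonzero(1,2) _ rev[OF disjoint(1)] rev[OF disjoint(2)]]
      full_symmetry_excluded[of b c a, OF _ _ _ nonzero(2,1) _ rev[OF swap[OF disjoint(1)]] rev[OF swap[OF disjoint(2)]]]
      distinct by blast+
qed

text \<open>At each pair, disjoint supports force one of the two alternatives of
  \<open>disjoint_bell_supports_cases\<close>.  A nonzero function with all three symmetries at one pair
  has none at the others, since symmetries of different type on overlapping pairs anticommute; this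
  excludes the first alternative.  In the second, the common symmetry type is the same on all three
  pairs, and composing the eigenvalues on \<open>ab\<close> and \<open>ac\<close> gives \<open>f\<close> and \<open>g\<close> the same eigenvalue on
  \<open>bc\<close>.\<close>

lemma zero_of_disjoint_bell_supports:
  assumes distinct: "a \<noteq> b" "a \<noteq> c" "b \<noteq> c"
    and disjoint: "bell_support a b f \<inter> bell_support a b g = {}"
      "bell_support a c f \<inter> bell_support a c g = {}"
      "bell_support b c f \<inter> bell_support b c g = {}"
  shows "(\<forall>x. f x = 0) \<or> (\<forall>x. g x = 0)"
proof (rule ccontr)
  assume "\<not> ?thesis"
  then obtain xf xg where nonzero: "f xf \<noteq> 0" "g xg \<noteq> 0" by blast
  obtain t1 s1 t2 s2 t3 s3 where
    ab: "pair_eigen t1 a b s1 f" "pair_eigen t1 a b (\<not> s1) g" and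
    ac: "pair_eigen t2 a c s2 f" "pair_eigen t2 a c (\<not> s2) g" and
    bc: "pair_eigen t3 b c s3 f" "pair_eigen t3 b c (\<not> s3) g"
    using disjoint_bell_supports_cases[OF distinct(1) disjoint(1)]
      disjoint_bell_supports_cases[OF distinct(2) disjoint(2)]
      disjoint_bell_supports_cases[OF distinct(3) disjoint(3)]
      no_full_symmetry_on_three_pairs[OF distinct nonzero disjoint] by blast
  have "t2 = t1"
    using pair_eigen_same_symmetry[OF distinct ab(1) ac(1) nonzero(1)] by simp
  moreover have "t3 = t1"
    using pair_eigen_same_symmetry[of b a c t1 s1 f] distinct ab(1) bc(1) nonzero(1)
    by (simp add: pair_eigen_sym[of _ a b])
  ultimately have "pair_eigen t1 b c (s1 = s2) f" "pair_eigen t1 b c (\<not> s1 \<longleftrightarrow> \<not> s2) g"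
    and "pair_eigen t1 b c s3 f" "pair_eigen t1 b c (\<not> s3) g"
    using pair_eigen_compose[OF distinct ab(1), of s2] pair_eigen_compose[OF distinct ab(2), of "\<not> s2"]
      ac bc by simp_all
  then have "(s1 = s2) = s3" "(\<not> s1 = (\<not> s2)) = (\<not> s3)"
    using pair_eigen_sign_unique nonzero by blast+
  then show False by blast
qed

section \<open>The inductive step\<close>

locale contraction_step =
  fixes V :: "nat set" and F :: bfun and c0 :: complex
  assumes finite_V: "finite V"
    and contractions: "\<And>a b k. a \<in> V \<Longrightarrow> b \<in> V \<Longrightarrow> a \<noteq> b \<Longrightarrow> k \<in> Kset \<Longrightarrow>
      twisted_real_multiple (V - {a, b}) (pair_contract a b k F)"
    and c0_nonzero: "c0 \<noteq> 0"
begin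

text \<open>In the application \<open>c0\<close> normalizes one nonzero contraction of \<open>F\<close> to a twisted-real function; a
  contraction is aligned if \<open>c0\<close> normalizes it as well.\<close>

definition aligned :: "nat \<Rightarrow> nat \<Rightarrow> mat2 \<Rightarrow> bool" where
  "aligned a b k \<longleftrightarrow> twisted_real (V - {a, b}) (\<lambda>x. pair_contract a b k F x / c0)"

definition aligned_part :: "nat \<Rightarrow> nat \<Rightarrow> bfun" where
  "aligned_part a b x = (\<Sum>k | k \<in> Kset \<and> aligned a b k. bell_part a b k F x)"

lemma aligned_part_if: "aligned_part a b = (\<lambda>x. \<Sum>k\<in>Kset. if aligned a b k then bell_part a b k F x else 0)"
  by (simp add: fun_eq_iff aligned_part_def sum.inter_filter[symmetric])

text \<open>Contracting both pairs gives one nonzero function that is twisted real after division by either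
  phase, so the phases differ by a real factor.\<close>

lemma aligned_transfer:
  assumes V: "{a, b, c, e} \<subseteq> V" and distinct: "a \<noteq> b" "c \<noteq> e" "{a, b} \<inter> {c, e} = {}"
    and k: "k \<in> Kset" "k' \<in> Kset"
    and nonzero: "pair_contract a b k (pair_contract c e k' F) x0 \<noteq> 0"
    and "aligned a b k"
  shows "aligned c e k'"
proof -
  let ?W = "V - {a, b} - {c, e}"
  have "twisted_real ?W (pair_contract c e k' (\<lambda>x. pair_contract a b k F x / c0))"
    using \<open>aligned a b k\<close> V distinct finite_V quaternionic_Kset[OF k(2)]
    by (intro twisted_real_contract) (auto simp: aligned_def)
  then have by_c0: "twisted_real ?W (\<lambda>x. pair_contract a b k (pair_contract c e k' F) x / c0)"
    by (rule twisted_real_cong) (simp add: pair_contract_linear pair_contract_commute[OF distinct(3)])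
  obtain c' where c': "c' \<noteq> 0" "twisted_real (V - {c, e}) (\<lambda>x. pair_contract c e k' F x / c')"
    using contractions[of c e k'] V distinct k by (auto simp: twisted_real_multiple_def)
  have "twisted_real (V - {c, e} - {a, b}) (pair_contract a b k (\<lambda>x. pair_contract c e k' F x / c'))"
    using c'(2) V distinct finite_V quaternionic_Kset[OF k(1)]
    by (intro twisted_real_contract) auto
  moreover have "V - {c, e} - {a, b} = ?W" by auto
  ultimately have "twisted_real ?W (pair_contract a b k (\<lambda>x. pair_contract c e k' F x / c'))"
    by simp
  then have by_c': "twisted_real ?W (\<lambda>x. pair_contract a b k (pair_contract c e k' F) x / c')"
    by (rule twisted_real_cong) (simp add: pair_contract_linear)
  have "c' / c0 \<in> \<real>"
    using twisted_real_ratio[OF by_c0 by_c' nonzero c0_nonzero c'(1)] .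
  from twisted_real_real_mult[OF this c'(2)] show ?thesis
    unfolding aligned_def by (rule twisted_real_cong) (use c'(1) in simp)
qed

lemma aligned_iff:
  assumes "{a, b, c, e} \<subseteq> V" "a \<noteq> b" "c \<noteq> e" "{a, b} \<inter> {c, e} = {}"
    and "k \<in> Kset" "k' \<in> Kset"
    and "pair_contract a b k (pair_contract c e k' F) x0 \<noteq> 0"
  shows "aligned a b k \<longleftrightarrow> aligned c e k'"
  using aligned_transfer[OF assms] aligned_transfer[of c e a b k' k x0] assms
    pair_contract_commute[of a b c e k k' F x0]
  by (auto simp: insert_commute Int_commute)

lemma contract_aligned_part_disjoint:
  assumes "{a, b, c, e} \<subseteq> V" "a \<noteq> b" "c \<noteq> e" "{a, b} \<inter> {c, e} = {}" and k': "k' \<in> Kset"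
  shows "pair_contract c e k' (aligned_part a b) x = (if aligned c e k' then pair_contract c e k' F x else 0)"
proof -
  let ?G = "pair_contract c e k' F"
  have "pair_contract c e k' (aligned_part a b) x
      = (\<Sum>k\<in>Kset. if aligned a b k then bell_part a b k ?G x else 0)"
    unfolding aligned_part_if pair_contract_sum pair_contract_if
    by (rule sum.cong) (simp_all add: pair_contract_bell_part_commute[OF assms(4)])
  also have "\<dots> = (\<Sum>k\<in>Kset. if aligned c e k' then bell_part a b k ?G x else 0)"
  proof (rule sum.cong)
    fix k assume k: "k \<in> Kset"
    show "(if aligned a b k then bell_part a b k ?G x else 0) = (if aligned c e k' then bell_part a b k ?G x else 0)"
    proof (cases "\<forall>y. pair_contract a b k ?G y = 0")
      case True
      then show ?thesis by (simp add: bell_part_def)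
    next
      case False
      then obtain x0 where "pair_contract a b k ?G x0 \<noteq> 0" by blast
      then show ?thesis using aligned_iff[OF assms(1-4) k k'] by simp
    qed
  qed simp
  also have "\<dots> = (if aligned c e k' then ?G x else 0)"
    using bell_decomposition[OF assms(2), of ?G x] by simp
  finally show ?thesis .
qed

lemma contract_aligned_part_same:
  assumes "a \<noteq> b" "k' \<in> Kset"
  shows "pair_contract a b k' (aligned_part a b) x = (if aligned a b k' then pair_contract a b k' F x else 0)"
proof -
  have "pair_contract a b k' (aligned_part a b) x
      = (\<Sum>k\<in>Kset. if k = k' then (if aligned a b k then pair_contract a b k F x else 0) else 0)"
    unfolding aligned_part_if pair_contract_sum pair_contract_if
    by (rule sum.cong) (auto simp: pair_contract_bell_part[OF assms(1) _ assms(2)])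
  also have "\<dots> = (if aligned a b k' then pair_contract a b k' F x else 0)"
    using assms(2) by simp
  finally show ?thesis .
qed

lemma aligned_part_eq:
  assumes "{a, b, c, e} \<subseteq> V" "a \<noteq> b" "c \<noteq> e" "{a, b} \<inter> {c, e} = {}"
  shows "aligned_part a b x = aligned_part c e x"
proof -
  have "\<forall>k\<in>Kset. \<forall>y. pair_contract c e k (\<lambda>x. aligned_part a b x - aligned_part c e x) y = 0"
    using contract_aligned_part_disjoint[OF assms] contract_aligned_part_same[OF assms(3)]
    by (simp add: pair_contract_linear)
  then show ?thesis using zero_of_vanishing_contractions[OF assms(3)] by fastforce
qed

lemma twisted_real_aligned_part:
  assumes "a \<in> V" "b \<in> V" "a \<noteq> b"
  shows "twisted_real V (\<lambda>x. aligned_part a b x / c0)"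
proof -
  have "twisted_real V (bell_part a b k (\<lambda>x. F x / c0))" if "k \<in> Kset" "aligned a b k" for k
  proof (rule twisted_real_bell_part[OF finite_V assms that(1)])
    show "twisted_real (V - {a, b}) (pair_contract a b k (\<lambda>x. F x / c0))"
      using that(2) unfolding aligned_def by (rule twisted_real_cong) (simp add: pair_contract_linear)
  qed
  then have "twisted_real V (\<lambda>x. \<Sum>k | k \<in> Kset \<and> aligned a b k. bell_part a b k (\<lambda>x. F x / c0) x)"
    by (intro twisted_real_sum) auto
  then show ?thesis
    unfolding aligned_part_def
    by (rule twisted_real_cong) (simp add: sum_divide_distrib bell_part_def pair_contract_linear)
qed


lemma eq_aligned_part:
  assumes distinct: "distinct [a, b, c, u, v]" and in_V: "set [a, b, c, u, v] \<subseteq> V"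
    and k0: "k0 \<in> Kset" "aligned a b k0" "pair_contract a b k0 F x0 \<noteq> 0"
  shows "F x = aligned_part a b x"
proof -
  let ?Q = "aligned_part a b"
  have contract_Q: "pair_contract p q k ?Q x = (if aligned p q k then pair_contract p q k F x else 0)"
    if "p \<in> {a, b, c}" "q \<in> {a, b, c}" "p \<noteq> q" "k \<in> Kset" for p q k x
  proof -
    have "pair_contract p q k ?Q x = pair_contract p q k (aligned_part u v) x"
      using aligned_part_eq[of a b u v] in_V distinct by (intro pair_contract_cong) auto
    also have "\<dots> = (if aligned p q k then pair_contract p q k F x else 0)"
      using that in_V distinct by (intro contract_aligned_part_disjoint) auto
    finally show ?thesis .
  qed
  have disjoint: "bell_support p q ?Q \<inter> bell_support p q (\<lambda>x. F x - ?Q x) = {}"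
    if "p \<in> {a, b, c}" "q \<in> {a, b, c}" "p \<noteq> q" for p q
    using contract_Q[OF that] by (auto simp: bell_support_def pair_contract_linear split: if_splits)
  have "(\<forall>x. ?Q x = 0) \<or> (\<forall>x. F x - ?Q x = 0)"
    using zero_of_disjoint_bell_supports[OF _ _ _ disjoint[of a b] disjoint[of a c] disjoint[of b c]] distinct
    by simp
  moreover have "\<not> (\<forall>x. ?Q x = 0)"
  proof
    assume "\<forall>x. ?Q x = 0"
    then have "pair_contract a b k0 ?Q x0 = 0"
      by (simp add: pair_contract_def)
    then show False
      using contract_Q[of a b k0 x0] k0 distinct by simp
  qed
  ultimately show ?thesis by auto
qed
end

lemma obtain_five_distinct:
  assumes "5 \<le> card V"
  obtains a b c u v where "distinct [a, b, c, u, v]" "set [a, b, c, u, v] \<subseteq> V"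
proof -
  obtain T where T: "T \<subseteq> V" "card T = 5" "finite T"
    using obtain_subset_with_card_n[OF assms] by blast
  obtain xs where xs: "set xs = T" "distinct xs"
    using finite_distinct_list[OF T(3)] by blast
  then have "length xs = 5" using distinct_card T(2) by fastforce
  then obtain a b c u v where "xs = [a, b, c, u, v]"
    by (auto simp: numeral_eq_Suc length_Suc_conv)
  then show ?thesis using that xs T(1) by blast
qed

lemma twisted_real_multiple_of_contractions:
  assumes finite_V: "finite V" and card_V: "5 \<le> card V"
    and contractions: "\<And>a b k. a \<in> V \<Longrightarrow> b \<in> V \<Longrightarrow> a \<noteq> b \<Longrightarrow> k \<in> Kset \<Longrightarrow>
      twisted_real_multiple (V - {a, b}) (pair_contract a b k F)"
  shows "twisted_real_multiple V F"
proof (cases "\<forall>x. F x = 0")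
  case True
  then show ?thesis by (simp add: twisted_real_multiple_zero)
next
  case False
  then obtain xF where "F xF \<noteq> 0" by blast
  obtain a b c u v where distinct: "distinct [a, b, c, u, v]" and in_V: "set [a, b, c, u, v] \<subseteq> V"
    using obtain_five_distinct[OF card_V] by blast
  obtain k0 x0 where k0: "k0 \<in> Kset" "pair_contract a b k0 F x0 \<noteq> 0"
    using zero_of_vanishing_contractions[of a b F xF] distinct \<open>F xF \<noteq> 0\<close> by auto
  obtain c0 where c0: "c0 \<noteq> 0" "twisted_real (V - {a, b}) (\<lambda>x. pair_contract a b k0 F x / c0)"
    using contractions[of a b k0] in_V distinct k0(1) by (auto simp: twisted_real_multiple_def)
  interpret contraction_step V F c0
    using finite_V contractions c0(1) by unfold_locales auto
  have "aligned a b k0"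
    using c0(2) by (simp add: aligned_def)
  then have F_eq: "F x = aligned_part a b x" for x
    using eq_aligned_part[OF distinct in_V k0(1) _ k0(2)] by blast
  have "twisted_real V (\<lambda>x. aligned_part a b x / c0)"
    using in_V distinct by (intro twisted_real_aligned_part) auto
  then have "twisted_real V (\<lambda>x. F x / c0)"
    by (rule twisted_real_cong) (simp add: F_eq)
  then show ?thesis using c0(1) unfolding twisted_real_multiple_def by blast
qed

section \<open>Finite groups of quaternionic matrices\<close>

definition trace2 :: "mat2 \<Rightarrow> complex" where
  "trace2 g = g False False + g True True"

primrec mat_pow :: "mat2 \<Rightarrow> nat \<Rightarrow> mat2" where
  "mat_pow g 0 = Imat"
| "mat_pow g (Suc n) = mmul2 (mat_pow g n) g"

lemma mat_monoid_pow: "g [^]\<^bsub>mat_monoid S\<^esub> (n :: nat) = mat_pow g n"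
  by (induct n) (simp_all add: mat_monoid_def)

primrec cayley_hamilton_coeffs :: "complex \<Rightarrow> nat \<Rightarrow> complex \<times> complex" where
  "cayley_hamilton_coeffs t 0 = (0, 1)"
| "cayley_hamilton_coeffs t (Suc n) =
     (t * fst (cayley_hamilton_coeffs t n) + snd (cayley_hamilton_coeffs t n), - fst (cayley_hamilton_coeffs t n))"

lemma mat_pow_cayley_hamilton:
  assumes "det2 g = 1"
  defines "ab \<equiv> cayley_hamilton_coeffs (trace2 g)"
  shows "mat_pow g n = (\<lambda>u v. fst (ab n) * g u v + snd (ab n) * Imat u v)"
proof (induct n)
  case 0
  then show ?case by (simp add: ab_def fun_eq_iff)
next
  case (Suc n)
  have square: "mmul2 g g = (\<lambda>u v. trace2 g * g u v - Imat u v)"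
    using assms(1) by (auto simp: mmul2_def fun_eq_iff det2_def trace2_def Imat_def mk2_def algebra_simps)
  have "mat_pow g (Suc n) = (\<lambda>u v. fst (ab n) * mmul2 g g u v + snd (ab n) * g u v)"
    using Suc by (auto simp: mmul2_def fun_eq_iff Imat_def mk2_def algebra_simps)
  then show ?case
    unfolding square by (simp add: ab_def fun_eq_iff algebra_simps)
qed

lemma root_pow_cayley_hamilton:
  assumes "l\<^sup>2 = t * l - 1"
  shows "l ^ n = fst (cayley_hamilton_coeffs t n) * l + snd (cayley_hamilton_coeffs t n)"
proof (induct n)
  case (Suc n)
  then have "l ^ Suc n = fst (cayley_hamilton_coeffs t n) * l\<^sup>2 + snd (cayley_hamilton_coeffs t n) * l"
    by (simp add: power2_eq_square algebra_simps)
  then show ?case unfolding assms by (simp add: algebra_simps)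
qed simp

lemma trace_real_of_finite_order:
  assumes det: "det2 g = 1" and pow: "mat_pow g n = Imat" and "n > 0"
  shows "trace2 g \<in> \<real>"
proof -
  let ?t = "trace2 g" and ?ab = "cayley_hamilton_coeffs (trace2 g) n"
  have E: "fst ?ab * g u v + snd ?ab * Imat u v = Imat u v" for u v
    using mat_pow_cayley_hamilton[OF det, of n] pow by (metis)
  show ?thesis
  proof (cases "fst ?ab = 0")
    case False
    then have "g False True = 0" "g True False = 0"
      using E[of False True] E[of True False] by (auto simp: Imat_def mk2_def)
    have "fst ?ab * g False False + snd ?ab = fst ?ab * g True True + snd ?ab"
      using E[of False False] E[of True True] by (simp add: Imat_def mk2_def)
    then have "g False False = g True True"
      using False by simp
    then have "g False False = 1 \<or> g False False = -1"
      using det \<open>g False True = 0\<close> \<open>g False False = g True True\<close>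
      by (simp add: det2_def power2_eq_1_iff[symmetric] power2_eq_square)
    then show ?thesis using \<open>g False False = g True True\<close> by (auto simp: trace2_def)
  next
    case True
    then have "snd ?ab = 1" using E[of False False] by (simp add: Imat_def mk2_def)
    \<comment> \<open>an eigenvalue of g: it is an n-th root of unity, and the other one is its inverse\<close>
    define l where "l = (?t + csqrt (?t\<^sup>2 - 4)) / 2"
    have root: "l\<^sup>2 = ?t * l - 1"
      unfolding l_def by (simp add: power2_eq_square field_simps)
        (simp add: power2_eq_square[symmetric] algebra_simps)
    have "l ^ n = 1" using root_pow_cayley_hamilton[OF root, of n] True \<open>snd ?ab = 1\<close> by simp
    then have "norm l ^ n = 1 ^ n"
      by (metis norm_one norm_power power_one)
    then have "norm l = 1"
      using \<open>n > 0\<close> power_eq_iff_eq_base[of n "norm l" 1] by simp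
    moreover have "?t = l + 1 / l"
    proof -
      have "l \<noteq> 0" using \<open>norm l = 1\<close> by auto
      then show ?thesis using root by (simp add: power2_eq_square field_simps)
    qed
    ultimately have "?t = l + cnj l"
      by (simp add: divide_conv_cnj complex_norm_square)
    then show ?thesis by (simp add: complex_add_cnj)
  qed
qed

lemma quaternionic_of_finite_group:
  assumes fin: "finite S" and grp: "group (mat_monoid S)" and det: "\<forall>g\<in>S. det2 g = 1"
    and K: "Kset \<subseteq> S" and B: "B \<in> S"
  shows "quaternionic B"
proof -
  let ?G = "mat_monoid S"
  have trace_real: "trace2 g \<in> \<real>" if g: "g \<in> S" for g
  proof -
    have "mat_pow g (order ?G) = Imat"
      using group.pow_order_eq_1[OF grp, of g] g unfolding mat_monoid_pow by (simp add: mat_monoid_def)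
    then have "mat_pow g (card S) = Imat"
      by (simp add: order_def mat_monoid_def)
    moreover have "card S > 0" using fin g by (auto simp: card_gt_0_iff)
    ultimately show ?thesis using trace_real_of_finite_order det g by blast
  qed
  have closed: "mmul2 B k \<in> S" if "k \<in> Kset" for k
    using monoid.m_closed[OF group.is_monoid[OF grp], of B k] B K that by (auto simp: mat_monoid_def)
  have "B False False + B True True \<in> \<real>"
    using trace_real[OF B] by (simp add: trace2_def)
  moreover have "\<i> * B False False - \<i> * B True True \<in> \<real>"
    using trace_real[OF closed[of Xmat]] by (simp add: trace2_def mmul2_def mult.commute)
  moreover have "B True False - B False True \<in> \<real>"
    using trace_real[OF closed[of Ymat]] by (simp add: trace2_def mmul2_def)
  moreover have "\<i> * B False True + \<i> * B True False \<in> \<real>"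
    using trace_real[OF closed[of Zmat]] by (simp add: trace2_def mmul2_def mult.commute)
  ultimately show ?thesis
    by (auto simp: quaternionic_def complex_eq_iff complex_is_Real_iff)
qed

lemma Bfrak_det:
  assumes "B \<in> Bfrak \<F>"
  shows "det2 B = 1"
proof -
  obtain A s where A: "B = (\<lambda>u v. A u v / s)" "det2 A \<noteq> 0" "s\<^sup>2 = det2 A"
    using assms unfolding Bfrak_def by blast
  then have "s \<noteq> 0" by auto
  then have "det2 B = det2 A / s\<^sup>2"
    unfolding A(1) det2_def by (simp add: field_simps power2_eq_square)
  then show ?thesis using A(2,3) by simp
qed

section \<open>Gadgets\<close>

definition relabel_edges :: "(nat + nat \<Rightarrow> nat + nat) \<Rightarrow> gadget \<Rightarrow> gadget" where
  "relabel_edges \<rho> G = map (\<lambda>(f, es). (f, map \<rho> es)) G"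

definition gadget_eval :: "gadget \<Rightarrow> (nat + nat \<Rightarrow> bool) \<Rightarrow> complex" where
  "gadget_eval G \<alpha> = prod_list (map (\<lambda>(f, es). snd f (map \<alpha> es)) G)"

definition edge_assignments :: "gadget \<Rightarrow> (nat \<Rightarrow> bool) set" where
  "edge_assignments G = {\<sigma>. \<forall>e. e \<notin> internal_edges G \<longrightarrow> \<sigma> e = False}"

lemma gadget_fun_eq_sum:
  "gadget_fun G x = (\<Sum>\<sigma>\<in>edge_assignments G. gadget_eval G (case_sum (\<lambda>i. x ! i) \<sigma>))"
  unfolding gadget_fun_def edge_assignments_def gadget_eval_def
  by (rule sum.cong) (auto intro!: arg_cong[where f = prod_list] split: sum.splits)

lemma gadget_eval_cong:
  "(\<And>l. l \<in> set (all_labels G) \<Longrightarrow> \<alpha> l = \<beta> l) \<Longrightarrow> gadget_eval G \<alpha> = gadget_eval G \<beta>"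
  unfolding gadget_eval_def all_labels_def
  by (induct G) (auto intro!: arg_cong2[where f = "(*)"] arg_cong[where f = "snd _"])

lemma gadget_eval_relabel: "gadget_eval (relabel_edges \<rho> G) \<alpha> = gadget_eval G (\<alpha> \<circ> \<rho>)"
  unfolding gadget_eval_def relabel_edges_def by (induct G) (auto simp: comp_def)

lemma gadget_eval_append: "gadget_eval (G1 @ G2) \<alpha> = gadget_eval G1 \<alpha> * gadget_eval G2 \<alpha>"
  unfolding gadget_eval_def by simp

lemma all_labels_relabel: "all_labels (relabel_edges \<rho> G) = map \<rho> (all_labels G)"
  unfolding all_labels_def relabel_edges_def by (induct G) auto

lemma all_labels_append: "all_labels (G1 @ G2) = all_labels G1 @ all_labels G2"
  unfolding all_labels_def by simp

lemma wf_gadget_dangling: "wf_gadget \<F> n G \<Longrightarrow> Inl i \<in> set (all_labels G) \<longleftrightarrow> i < n"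
  unfolding wf_gadget_def by (metis count_list_0_iff not_le zero_neq_one)

lemma wf_gadget_relabel_vertices:
  "wf_gadget \<F> n G \<Longrightarrow> \<forall>(f, es) \<in> set (relabel_edges \<rho> G). f \<in> \<F> \<and> length es = fst f"
  unfolding wf_gadget_def relabel_edges_def by auto

definition permute_dangling :: "nat \<Rightarrow> (nat \<Rightarrow> nat) \<Rightarrow> nat + nat \<Rightarrow> nat + nat" where
  "permute_dangling n r l = (case l of Inl i \<Rightarrow> if i < n then Inl (r i) else Inl i | Inr e \<Rightarrow> Inr e)"

lemma inj_permute_dangling:
  assumes "bij_betw r {0..<n} {0..<n}"
  shows "inj (permute_dangling n r)"
proof (rule injI)
  fix l1 l2 assume eq: "permute_dangling n r l1 = permute_dangling n r l2"
  have inj: "inj_on r {0..<n}" and range: "\<And>i. i < n \<Longrightarrow> r i < n"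
    using assms unfolding bij_betw_def by auto
  show "l1 = l2"
  proof (cases l1; cases l2)
    fix i j assume l: "l1 = Inl i" "l2 = Inl j"
    have "i = j"
    proof (cases "i < n"; cases "j < n")
      assume "i < n" "j < n"
      then show ?thesis using eq l inj by (auto simp: permute_dangling_def dest: inj_onD)
    next
      assume "i < n" "\<not> j < n"
      then show ?thesis using eq l range[of i] by (auto simp: permute_dangling_def)
    next
      assume "\<not> i < n" "j < n"
      then show ?thesis using eq l range[of j] by (auto simp: permute_dangling_def)
    next
      assume "\<not> i < n" "\<not> j < n"
      then show ?thesis using eq l by (auto simp: permute_dangling_def)
    qed
    then show ?thesis using l by simp
  qed (use eq in \<open>auto simp: permute_dangling_def split: if_splits\<close>)
qed

lemma count_list_permute:
  assumes "bij_betw r {0..<n} {0..<n}"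
  shows "count_list (all_labels (relabel_edges (permute_dangling n r) G)) (permute_dangling n r l)
       = count_list (all_labels G) l"
  by (simp add: all_labels_relabel count_list_map_conv[OF inj_permute_dangling[OF assms]])

lemma wf_gadget_permute:
  assumes wf: "wf_gadget \<F> n G" and r: "bij_betw r {0..<n} {0..<n}"
  shows "wf_gadget \<F> n (relabel_edges (permute_dangling n r) G)"
proof -
  let ?L = "all_labels (relabel_edges (permute_dangling n r) G)"
  show ?thesis unfolding wf_gadget_def
  proof (intro conjI allI impI)
    show "\<forall>(f, es)\<in>set (relabel_edges (permute_dangling n r) G). f \<in> \<F> \<and> length es = fst f"
      using wf_gadget_relabel_vertices[OF wf] .
  next
    fix i assume "i < n"
    then obtain j where j: "j < n" "r j = i"
      using r unfolding bij_betw_def by (metis atLeastLessThan_iff imageE zero_le)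
    then have "permute_dangling n r (Inl j) = Inl i"
      by (simp add: permute_dangling_def)
    then show "count_list ?L (Inl i) = 1"
      using count_list_permute[OF r, of G "Inl j"] wf j(1) unfolding wf_gadget_def by simp
  next
    fix i assume "n \<le> i"
    then have "permute_dangling n r (Inl i) = Inl i"
      by (simp add: permute_dangling_def)
    then show "count_list ?L (Inl i) = 0"
      using count_list_permute[OF r, of G "Inl i"] wf \<open>n \<le> i\<close> unfolding wf_gadget_def by simp
  next
    fix e
    have "permute_dangling n r (Inr e) = Inr e"
      by (simp add: permute_dangling_def)
    then show "count_list ?L (Inr e) = 0 \<or> count_list ?L (Inr e) = 2"
      using count_list_permute[OF r, of G "Inr e"] wf unfolding wf_gadget_def by simp
  qed
qed

lemma internal_edges_permute:
  assumes "bij_betw r {0..<n} {0..<n}"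
  shows "internal_edges (relabel_edges (permute_dangling n r) G) = internal_edges G"
proof -
  have "count_list (all_labels (relabel_edges (permute_dangling n r) G)) (Inr e) = count_list (all_labels G) (Inr e)" for e
    using count_list_permute[OF assms, of G "Inr e"] by (simp add: permute_dangling_def)
  then have "Inr e \<in> set (all_labels (relabel_edges (permute_dangling n r) G)) \<longleftrightarrow> Inr e \<in> set (all_labels G)" for e
    by (metis count_list_0_iff)
  then show ?thesis
    unfolding internal_edges_def by blast
qed

lemma gadget_fun_permute:
  assumes wf: "wf_gadget \<F> n G" and r: "bij_betw r {0..<n} {0..<n}"
  shows "gadget_fun (relabel_edges (permute_dangling n r) G) ys = gadget_fun G (map (\<lambda>l. ys ! r l) [0..<n])"
  unfolding gadget_fun_eq_sum edge_assignments_def internal_edges_permute[OF r]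
proof (rule sum.cong[OF refl])
  fix \<sigma>
  show "gadget_eval (relabel_edges (permute_dangling n r) G) (case_sum (\<lambda>i. ys ! i) \<sigma>)
      = gadget_eval G (case_sum (\<lambda>i. map (\<lambda>l. ys ! r l) [0..<n] ! i) \<sigma>)"
    unfolding gadget_eval_relabel
  proof (rule gadget_eval_cong)
    fix l assume l: "l \<in> set (all_labels G)"
    show "(case_sum (\<lambda>i. ys ! i) \<sigma> \<circ> permute_dangling n r) l
        = case_sum (\<lambda>i. map (\<lambda>l. ys ! r l) [0..<n] ! i) \<sigma> l"
    proof (cases l)
      case (Inl i)
      then have "i < n" using wf_gadget_dangling[OF wf] l by blast
      then show ?thesis using Inl by (simp add: permute_dangling_def)
    qed (simp add: permute_dangling_def)
  qed
qed

definition glue_left :: "nat \<Rightarrow> nat + nat \<Rightarrow> nat + nat" where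
  "glue_left m l = (case l of
      Inl i \<Rightarrow> if i = m then Inr 0 else if i = Suc m then Inr 1 else Inl i
    | Inr e \<Rightarrow> Inr (2 * e + 2))"

definition glue_right :: "nat \<Rightarrow> nat + nat \<Rightarrow> nat + nat" where
  "glue_right m l = (case l of
      Inl i \<Rightarrow> if i = 0 then Inr 0 else if i = 1 then Inr 1 else Inl (i + m)
    | Inr e \<Rightarrow> Inr (2 * e + 3))"

text \<open>The dangling edges \<open>m, m + 1\<close> of \<open>G\<close> are joined to the dangling edges \<open>0, 1\<close> of \<open>H\<close>,
  becoming the internal edges \<open>0, 1\<close>; the internal edges of \<open>G\<close> and \<open>H\<close> are renumbered to the
  even and odd numbers \<open>\<ge> 2\<close>.\<close>

definition glue :: "nat \<Rightarrow> gadget \<Rightarrow> gadget \<Rightarrow> gadget" where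
  "glue m G H = relabel_edges (glue_left m) G @ relabel_edges (glue_right m) H"

lemma inj_glue_left: "inj (glue_left m)"
  by (rule injI) (auto simp: glue_left_def split: sum.splits if_splits)

lemma inj_glue_right: "inj (glue_right m)"
  by (rule injI) (auto simp: glue_right_def split: sum.splits if_splits)

lemma glue_left_Inr:
  "glue_left m l = Inr e \<longleftrightarrow> (l = Inl m \<and> e = 0) \<or> (l = Inl (Suc m) \<and> e = 1) \<or> (\<exists>e'. l = Inr e' \<and> e = 2 * e' + 2)"
  by (auto simp: glue_left_def split: sum.splits if_splits)

lemma glue_right_Inr:
  "glue_right m l = Inr e \<longleftrightarrow> (l = Inl 0 \<and> e = 0) \<or> (l = Inl 1 \<and> e = 1) \<or> (\<exists>e'. l = Inr e' \<and> e = 2 * e' + 3)"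
  by (auto simp: glue_right_def split: sum.splits if_splits)

lemma all_labels_glue:
  "all_labels (glue m G H) = map (glue_left m) (all_labels G) @ map (glue_right m) (all_labels H)"
  by (simp add: glue_def all_labels_append all_labels_relabel)

lemma internal_edges_glue:
  assumes "wf_gadget \<F> (m + 2) G" "wf_gadget \<F> 2 H"
  shows "e \<in> internal_edges (glue m G H) \<longleftrightarrow>
    e = 0 \<or> e = 1 \<or> (\<exists>e'\<in>internal_edges G. e = 2 * e' + 2) \<or> (\<exists>e'\<in>internal_edges H. e = 2 * e' + 3)"
proof -
  have "Inl m \<in> set (all_labels G)" "Inl (Suc m) \<in> set (all_labels G)"
    "Inl 0 \<in> set (all_labels H)" "Inl 1 \<in> set (all_labels H)"
    using wf_gadget_dangling[OF assms(1)] wf_gadget_dangling[OF assms(2)] by auto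
  moreover have "e \<in> internal_edges (glue m G H) \<longleftrightarrow>
      (\<exists>l\<in>set (all_labels G). glue_left m l = Inr e) \<or> (\<exists>l\<in>set (all_labels H). glue_right m l = Inr e)"
    unfolding internal_edges_def all_labels_glue by force
  ultimately show ?thesis
    unfolding glue_left_Inr glue_right_Inr internal_edges_def by auto
qed

lemma count_list_map_outside_range: "(\<And>y. \<rho> y \<noteq> z) \<Longrightarrow> count_list (map \<rho> L) z = 0"
  by (auto simp: count_list_0_iff)

lemma count_list_glue_Inl:
  assumes G: "wf_gadget \<F> (m + 2) G" and H: "wf_gadget \<F> 2 H"
  shows "count_list (all_labels (glue m G H)) (Inl i) = (if i < m then 1 else 0)"
proof -
  have G_count: "count_list (all_labels G) (Inl j) = (if j < m + 2 then 1 else 0)" for j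
    using G unfolding wf_gadget_def by (auto simp: not_less)
  have H_count: "count_list (all_labels H) (Inl j) = (if j < 2 then 1 else 0)" for j
    using H unfolding wf_gadget_def by (auto simp: not_less)
  have left: "count_list (map (glue_left m) (all_labels G)) (Inl i) = (if i < m then 1 else 0)"
  proof (cases "i = m \<or> i = Suc m")
    case True
    then show ?thesis
      by (intro trans[OF count_list_map_outside_range]) (auto simp: glue_left_def split: sum.splits)
  next
    case False
    then have "glue_left m (Inl i) = Inl i" by (simp add: glue_left_def)
    then show ?thesis
      using count_list_map_conv[OF inj_glue_left[of m], of "all_labels G" "Inl i"] G_count[of i] False by simp
  qed
  have right: "count_list (map (glue_right m) (all_labels H)) (Inl i) = 0"
  proof (cases "i < m + 2")
    case True
    then show ?thesis
      by (intro count_list_map_outside_range) (auto simp: glue_right_def split: sum.splits)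
  next
    case False
    then have "glue_right m (Inl (i - m)) = Inl i" by (simp add: glue_right_def)
    then show ?thesis
      using count_list_map_conv[OF inj_glue_right[of m], of "all_labels H" "Inl (i - m)"] H_count[of "i - m"] False
      by simp
  qed
  show ?thesis using left right by (simp add: all_labels_glue)
qed

lemma count_list_glue_Inr:
  assumes G: "wf_gadget \<F> (m + 2) G" and H: "wf_gadget \<F> 2 H"
  shows "count_list (all_labels (glue m G H)) (Inr e) \<in> {0, 2}"
proof -
  let ?cG = "count_list (map (glue_left m) (all_labels G))"
  let ?cH = "count_list (map (glue_right m) (all_labels H))"
  have G_count: "count_list (all_labels G) (Inl j) = 1" if "j < m + 2" for j
    using G that unfolding wf_gadget_def by auto
  have H_count: "count_list (all_labels H) (Inl j) = 1" if "j < 2" for j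
    using H that unfolding wf_gadget_def by auto
  have "e = 0 \<or> e = 1 \<or> (\<exists>e'. e = 2 * e' + 2) \<or> (\<exists>e'. e = 2 * e' + 3)"
    by presburger
  then consider "e = 0" | "e = 1" | e' where "e = 2 * e' + 2" | e' where "e = 2 * e' + 3"
    by blast
  then have "?cG (Inr e) + ?cH (Inr e) \<in> {0, 2}"
  proof cases
    case 1
    then show ?thesis
      using count_list_map_conv[OF inj_glue_left[of m], of "all_labels G" "Inl m"] G_count[of m]
        count_list_map_conv[OF inj_glue_right[of m], of "all_labels H" "Inl 0"] H_count[of 0]
      by (simp add: glue_left_def glue_right_def)
  next
    case 2
    then show ?thesis
      using count_list_map_conv[OF inj_glue_left[of m], of "all_labels G" "Inl (Suc m)"] G_count[of "Suc m"]
        count_list_map_conv[OF inj_glue_right[of m], of "all_labels H" "Inl 1"] H_count[of 1]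
      by (simp add: glue_left_def glue_right_def)
  next
    case (3 e')
    then have "?cH (Inr e) = 0"
      by (intro count_list_map_outside_range) (auto simp: glue_right_def split: sum.splits if_splits; presburger)
    moreover have "?cG (Inr e) = count_list (all_labels G) (Inr e')"
      using count_list_map_conv[OF inj_glue_left[of m], of "all_labels G" "Inr e'"] 3 by (simp add: glue_left_def)
    ultimately show ?thesis using G unfolding wf_gadget_def by auto
  next
    case (4 e')
    then have "?cG (Inr e) = 0"
      by (intro count_list_map_outside_range) (auto simp: glue_left_def split: sum.splits if_splits; presburger)
    moreover have "?cH (Inr e) = count_list (all_labels H) (Inr e')"
      using count_list_map_conv[OF inj_glue_right[of m], of "all_labels H" "Inr e'"] 4 by (simp add: glue_right_def)
    ultimately show ?thesis using H unfolding wf_gadget_def by auto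
  qed
  then show ?thesis by (simp add: all_labels_glue)
qed

lemma wf_gadget_glue:
  assumes G: "wf_gadget \<F> (m + 2) G" and H: "wf_gadget \<F> 2 H"
  shows "wf_gadget \<F> m (glue m G H)"
  unfolding wf_gadget_def
proof (intro conjI allI impI)
  show "\<forall>(f, es)\<in>set (glue m G H). f \<in> \<F> \<and> length es = fst f"
    using wf_gadget_relabel_vertices[OF G, of "glue_left m"] wf_gadget_relabel_vertices[OF H, of "glue_right m"]
    unfolding glue_def set_append ball_Un by blast
qed (use count_list_glue_Inl[OF G H] count_list_glue_Inr[OF G H] in auto)

lemma gadget_eval_glue:
  assumes G: "wf_gadget \<F> (m + 2) G" and H: "wf_gadget \<F> 2 H" and ys: "length ys = m"
  shows "gadget_eval (glue m G H) (case_sum (\<lambda>i. ys ! i) \<sigma>)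
       = gadget_eval G (case_sum (\<lambda>i. (ys @ [\<sigma> 0, \<sigma> 1]) ! i) (\<lambda>e. \<sigma> (2 * e + 2)))
       * gadget_eval H (case_sum (\<lambda>i. [\<sigma> 0, \<sigma> 1] ! i) (\<lambda>e. \<sigma> (2 * e + 3)))"
proof -
  have "gadget_eval G (case_sum (\<lambda>i. ys ! i) \<sigma> \<circ> glue_left m)
      = gadget_eval G (case_sum (\<lambda>i. (ys @ [\<sigma> 0, \<sigma> 1]) ! i) (\<lambda>e. \<sigma> (2 * e + 2)))"
  proof (rule gadget_eval_cong)
    fix l assume l: "l \<in> set (all_labels G)"
    show "(case_sum (\<lambda>i. ys ! i) \<sigma> \<circ> glue_left m) l = case_sum (\<lambda>i. (ys @ [\<sigma> 0, \<sigma> 1]) ! i) (\<lambda>e. \<sigma> (2 * e + 2)) l"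
    proof (cases l)
      case (Inl i)
      then have "i < m + 2" using wf_gadget_dangling[OF G] l by blast
      then show ?thesis using Inl ys by (auto simp: glue_left_def nth_append)
    qed (simp add: glue_left_def)
  qed
  moreover have "gadget_eval H (case_sum (\<lambda>i. ys ! i) \<sigma> \<circ> glue_right m)
      = gadget_eval H (case_sum (\<lambda>i. [\<sigma> 0, \<sigma> 1] ! i) (\<lambda>e. \<sigma> (2 * e + 3)))"
  proof (rule gadget_eval_cong)
    fix l assume l: "l \<in> set (all_labels H)"
    show "(case_sum (\<lambda>i. ys ! i) \<sigma> \<circ> glue_right m) l = case_sum (\<lambda>i. [\<sigma> 0, \<sigma> 1] ! i) (\<lambda>e. \<sigma> (2 * e + 3)) l"
    proof (cases l)
      case (Inl i)
      then have "i < 2" using wf_gadget_dangling[OF H] l by blast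
      then show ?thesis using Inl by (auto simp: glue_right_def less_2_cases_iff)
    qed (simp add: glue_right_def)
  qed
  ultimately show ?thesis
    by (simp add: glue_def gadget_eval_append gadget_eval_relabel)
qed

lemma sum_edge_assignments_glue:
  assumes G: "wf_gadget \<F> (m + 2) G" and H: "wf_gadget \<F> 2 H"
  shows "(\<Sum>\<sigma>\<in>edge_assignments (glue m G H). g (\<sigma> 0) (\<sigma> 1) (\<lambda>e. \<sigma> (2 * e + 2)) (\<lambda>e. \<sigma> (2 * e + 3)))
       = (\<Sum>u\<in>UNIV. \<Sum>v\<in>UNIV. \<Sum>s\<in>edge_assignments G. \<Sum>t\<in>edge_assignments H. g u v s t)"
proof -
  let ?split = "\<lambda>\<sigma>. (\<sigma> 0, \<sigma> 1, \<lambda>e. \<sigma> (2 * e + 2), \<lambda>e. \<sigma> (2 * e + 3))"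
  let ?join = "\<lambda>(u, v, s, t) e. if e = 0 then u else if e = 1 then v
                 else if even e then s ((e - 2) div 2) else t ((e - 3) div 2)"
  let ?EA = "edge_assignments (glue m G H)"
  have parity: "e = 0 \<or> e = 1 \<or> (\<exists>e'. e = 2 * e' + 2) \<or> (\<exists>e'. e = 2 * e' + 3)" for e :: nat
    by presburger
  have "(\<Sum>\<sigma>\<in>?EA. g (\<sigma> 0) (\<sigma> 1) (\<lambda>e. \<sigma> (2 * e + 2)) (\<lambda>e. \<sigma> (2 * e + 3)))
      = (\<Sum>(u, v, s, t)\<in>UNIV \<times> UNIV \<times> edge_assignments G \<times> edge_assignments H. g u v s t)"
  proof (rule sum.reindex_bij_witness[where i = ?join and j = ?split])
    fix \<sigma> assume "\<sigma> \<in> ?EA"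
    show "?join (?split \<sigma>) = \<sigma>"
    proof
      fix e show "?join (?split \<sigma>) e = \<sigma> e" using parity[of e] by auto
    qed
  next
    fix \<sigma> assume "\<sigma> \<in> ?EA"
    moreover have "2 * e + 2 \<notin> internal_edges (glue m G H)" if "e \<notin> internal_edges G" for e
      using that unfolding internal_edges_glue[OF G H] by auto presburger+
    moreover have "2 * e + 3 \<notin> internal_edges (glue m G H)" if "e \<notin> internal_edges H" for e
      using that unfolding internal_edges_glue[OF G H] by auto presburger+
    ultimately show "?split \<sigma> \<in> UNIV \<times> UNIV \<times> edge_assignments G \<times> edge_assignments H"
      by (auto simp: edge_assignments_def)
  next
    fix z assume "z \<in> (UNIV :: bool set) \<times> (UNIV :: bool set) \<times> edge_assignments G \<times> edge_assignments H"
    then obtain u v s t where z: "z = (u, v, s, t)" "s \<in> edge_assignments G" "t \<in> edge_assignments H"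
      by auto
    show "?split (?join z) = z" using z by auto
    show "?join z \<in> ?EA"
      unfolding edge_assignments_def
    proof (intro CollectI allI impI)
      fix e assume e: "e \<notin> internal_edges (glue m G H)"
      then consider e' where "e = 2 * e' + 2" "e' \<notin> internal_edges G"
        | e' where "e = 2 * e' + 3" "e' \<notin> internal_edges H"
        using parity[of e] unfolding internal_edges_glue[OF G H] by blast
      then show "?join z e = False"
        by cases (use z in \<open>auto simp: edge_assignments_def\<close>)
    qed
  qed simp
  also have "\<dots> = (\<Sum>u\<in>UNIV. \<Sum>v\<in>UNIV. \<Sum>s\<in>edge_assignments G. \<Sum>t\<in>edge_assignments H. g u v s t)"
    by (simp add: sum.cartesian_product)
  finally show ?thesis .
qed

lemma gadget_fun_glue:
  assumes G: "wf_gadget \<F> (m + 2) G" and H: "wf_gadget \<F> 2 H" and ys: "length ys = m"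
  shows "gadget_fun (glue m G H) ys = (\<Sum>u\<in>UNIV. \<Sum>v\<in>UNIV. gadget_fun G (ys @ [u, v]) * gadget_fun H [u, v])"
proof -
  have "gadget_fun (glue m G H) ys = (\<Sum>\<sigma>\<in>edge_assignments (glue m G H).
      gadget_eval G (case_sum (\<lambda>i. (ys @ [\<sigma> 0, \<sigma> 1]) ! i) (\<lambda>e. \<sigma> (2 * e + 2)))
    * gadget_eval H (case_sum (\<lambda>i. [\<sigma> 0, \<sigma> 1] ! i) (\<lambda>e. \<sigma> (2 * e + 3))))"
    unfolding gadget_fun_eq_sum gadget_eval_glue[OF G H ys] ..
  also have "\<dots> = (\<Sum>u\<in>UNIV. \<Sum>v\<in>UNIV. \<Sum>s\<in>edge_assignments G. \<Sum>t\<in>edge_assignments H.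
      gadget_eval G (case_sum (\<lambda>i. (ys @ [u, v]) ! i) s) * gadget_eval H (case_sum (\<lambda>i. [u, v] ! i) t))"
    using sum_edge_assignments_glue[OF G H, of "\<lambda>u v s t.
      gadget_eval G (case_sum (\<lambda>i. (ys @ [u, v]) ! i) s) * gadget_eval H (case_sum (\<lambda>i. [u, v] ! i) t)"]
    by simp
  also have "\<dots> = (\<Sum>u\<in>UNIV. \<Sum>v\<in>UNIV. gadget_fun G (ys @ [u, v]) * gadget_fun H [u, v])"
    by (simp add: gadget_fun_eq_sum sum_product)
  finally show ?thesis .
qed

section \<open>Realizable functions are twisted real up to a scalar\<close>

definition realizable_on :: "sig set \<Rightarrow> nat set \<Rightarrow> bfun \<Rightarrow> bool" where
  "realizable_on \<F> V f \<longleftrightarrow> (\<exists>n G h. wf_gadget \<F> n G \<and> bij_betw h {0..<n} V \<and>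
      (\<forall>x. f x = gadget_fun G (map (\<lambda>i. x (h i)) [0..<n])))"

lemma realizable_on_rebase:
  assumes "realizable_on \<F> V f" and h': "bij_betw h' {0..<n} V"
  shows "\<exists>G. wf_gadget \<F> n G \<and> (\<forall>x. f x = gadget_fun G (map (\<lambda>i. x (h' i)) [0..<n]))"
proof -
  obtain n' G h where G: "wf_gadget \<F> n' G" and h: "bij_betw h {0..<n'} V"
    and f: "\<And>x. f x = gadget_fun G (map (\<lambda>i. x (h i)) [0..<n'])"
    using assms(1) unfolding realizable_on_def by blast
  have "n' = n" using bij_betw_same_card[OF h] bij_betw_same_card[OF h'] by simp
  define r where "r = (\<lambda>l. the_inv_into {0..<n} h' (h l))"
  have r: "bij_betw r {0..<n} {0..<n}"
    unfolding r_def using bij_betw_trans[OF h bij_betw_the_inv_into[OF h']] \<open>n' = n\<close> by (simp add: comp_def)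
  have h'_r: "h' (r l) = h l" if "l < n" for l
  proof -
    have "h l \<in> V" using that h \<open>n' = n\<close> by (auto dest: bij_betwE)
    then show ?thesis unfolding r_def by (rule f_the_inv_into_f_bij_betw[OF h'])
  qed
  have "r l < n" if "l < n" for l
    using r that unfolding bij_betw_def by auto
  then have map_eq: "map (\<lambda>l. map (\<lambda>i. x (h' i)) [0..<n] ! r l) [0..<n] = map (\<lambda>i. x (h i)) [0..<n]" for x
    using h'_r by (intro map_cong) auto
  have "f x = gadget_fun (relabel_edges (permute_dangling n r) G) (map (\<lambda>i. x (h' i)) [0..<n])" for x
    unfolding f gadget_fun_permute[OF G[unfolded \<open>n' = n\<close>] r] \<open>n' = n\<close> map_eq ..
  then show ?thesis using wf_gadget_permute[OF G[unfolded \<open>n' = n\<close>] r] by blast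
qed

lemma bij_betw_append_two:
  fixes m :: nat
  assumes "bij_betw g {0..<m} W" "a \<notin> W" "b \<notin> W" "a \<noteq> b"
  shows "bij_betw (\<lambda>l. if l < m then g l else if l = m then a else b) {0..<m + 2} (insert a (insert b W))"
proof -
  let ?h = "\<lambda>l. if l < m then g l else if l = m then a else b"
  have "bij_betw ?h {0..<m} W"
    using assms(1) by (rule bij_betw_cong[THEN iffD1, rotated]) simp
  moreover have "bij_betw ?h {m, Suc m} {a, b}"
    using assms(4) by (auto simp: bij_betw_def)
  ultimately have "bij_betw ?h ({0..<m} \<union> {m, Suc m}) (W \<union> {a, b})"
    using assms(2,3) by (intro bij_betw_combine) auto
  moreover have "{0..<m} \<union> {m, Suc m} = {0..<m + 2}" by auto
  ultimately show ?thesis by (simp add: insert_commute)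
qed

lemma realizable_on_contract:
  assumes f: "realizable_on \<F> V f" and ab: "a \<in> V" "b \<in> V" "a \<noteq> b" and A: "realizable_bin \<F> A"
  shows "realizable_on \<F> (V - {a, b}) (pair_contract a b A f)"
proof -
  have "finite V" using f unfolding realizable_on_def by (metis bij_betw_finite finite_atLeastLessThan)
  define m where "m = card V - 2"
  have "card (V - {a, b}) = m"
    unfolding m_def using \<open>finite V\<close> ab by (simp add: card_Diff_subset)
  then obtain g where g: "bij_betw g {0..<m} (V - {a, b})"
    using ex_bij_betw_nat_finite[of "V - {a, b}"] \<open>finite V\<close> by auto
  define h where "h = (\<lambda>l. if l < m then g l else if l = m then a else b)"
  have "insert a (insert b (V - {a, b})) = V"
    using ab by auto
  then have "bij_betw h {0..<m + 2} V"
    using bij_betw_append_two[OF g, of a b] ab unfolding h_def by simp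
  then obtain G where G: "wf_gadget \<F> (m + 2) G"
    and fG: "\<And>x. f x = gadget_fun G (map (\<lambda>i. x (h i)) [0..<m + 2])"
    using realizable_on_rebase[OF f] by blast
  obtain H where H: "wf_gadget \<F> 2 H" and AH: "\<And>xs. length xs = 2 \<Longrightarrow> A (xs ! 0) (xs ! 1) = gadget_fun H xs"
    using A unfolding realizable_bin_def realizable_def by blast
  have g_not_ab: "g i \<noteq> a \<and> g i \<noteq> b" if "i < m" for i
    using bij_betwE[OF g] that by fastforce
  have map_upd: "map (\<lambda>i. (x(a := u, b := v)) (h i)) [0..<m + 2] = map (\<lambda>i. x (g i)) [0..<m] @ [u, v]"
    for x u v
    using g_not_ab ab(3) by (simp add: h_def)
  have A_H: "A u v = gadget_fun H [u, v]" for u v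
    using AH[of "[u, v]"] by simp
  have "pair_contract a b A f x = gadget_fun (glue m G H) (map (\<lambda>i. x (g i)) [0..<m])" for x
  proof -
    have "pair_contract a b A f x
        = (\<Sum>u\<in>UNIV. \<Sum>v\<in>UNIV. gadget_fun G (map (\<lambda>i. x (g i)) [0..<m] @ [u, v]) * gadget_fun H [u, v])"
      unfolding pair_contract_as_sum fG map_upd A_H by (simp only: mult.commute)
    also have "\<dots> = gadget_fun (glue m G H) (map (\<lambda>i. x (g i)) [0..<m])"
      using gadget_fun_glue[OF G H] by simp
    finally show ?thesis .
  qed
  then show ?thesis
    unfolding realizable_on_def using wf_gadget_glue[OF G H] g by blast
qed

lemma sum_lessThan_double: "(\<Sum>i<2 * d. f i) = (\<Sum>j<d. f (2 * j) + f (2 * j + 1))"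
  for f :: "nat \<Rightarrow> 'a::comm_monoid_add"
  by (induct d) (simp_all add: algebra_simps)

lemma twisted_real_pairing_product:
  fixes d :: nat
  assumes \<pi>: "bij_betw \<pi> {0..<2 * d} V" and k: "\<forall>j<d. quaternionic (k j)"
  shows "twisted_real V (\<lambda>x. \<Prod>j<d. k j (x (\<pi> (2 * j))) (x (\<pi> (2 * j + 1))))"
  unfolding twisted_real_def
proof
  fix x
  have in_V: "\<pi> i \<in> V" if "i < 2 * d" for i using \<pi> that by (auto dest: bij_betwE)
  have "(\<Prod>j<d. k j (flip_on V x (\<pi> (2 * j))) (flip_on V x (\<pi> (2 * j + 1))))
      = (\<Prod>j<d. (-1) ^ (of_bool (x (\<pi> (2 * j))) + of_bool (x (\<pi> (2 * j + 1))))
                * cnj (k j (x (\<pi> (2 * j))) (x (\<pi> (2 * j + 1)))))"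
    using in_V k by (intro prod.cong) (auto simp: flip_on_def quaternionic_flip)
  also have "\<dots> = (-1) ^ (\<Sum>j<d. of_bool (x (\<pi> (2 * j))) + of_bool (x (\<pi> (2 * j + 1))))
                * cnj (\<Prod>j<d. k j (x (\<pi> (2 * j))) (x (\<pi> (2 * j + 1))))"
    by (simp add: prod.distrib power_sum)
  also have "(\<Sum>j<d. of_bool (x (\<pi> (2 * j))) + of_bool (x (\<pi> (2 * j + 1)))) = (\<Sum>i<2 * d. of_bool (x (\<pi> i)) :: nat)"
    by (rule sum_lessThan_double[symmetric])
  also have "\<dots> = weight V x"
    unfolding weight_def using sum.reindex_bij_betw[OF \<pi>, of "\<lambda>i. of_bool (x i)"]
    by (simp only: atLeast0LessThan)
  finally show "(\<Prod>j<d. k j (flip_on V x (\<pi> (2 * j))) (flip_on V x (\<pi> (2 * j + 1))))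
      = (-1) ^ weight V x * cnj (\<Prod>j<d. k j (x (\<pi> (2 * j))) (x (\<pi> (2 * j + 1))))" .
qed

lemma twisted_real_multiple_pairing_product:
  fixes d :: nat
  assumes "bij_betw \<pi> {0..<2 * d} V" "\<forall>j<d. quaternionic (k j)"
    and "\<And>x. f x = c * (\<Prod>j<d. k j (x (\<pi> (2 * j))) (x (\<pi> (2 * j + 1))))"
  shows "twisted_real_multiple V f"
proof (cases "c = 0")
  case True
  then show ?thesis using assms(3) by (simp add: twisted_real_multiple_zero)
next
  case False
  have "twisted_real V (\<lambda>x. f x / c)"
    using twisted_real_pairing_product[OF assms(1,2)] by (rule twisted_real_cong) (simp add: assms(3) False)
  then show ?thesis using False unfolding twisted_real_multiple_def by blast
qed

lemma realizable_on_card: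
  assumes "realizable_on \<F> V f"
  obtains G h where "wf_gadget \<F> (card V) G" "bij_betw h {0..<card V} V"
    "\<And>x. f x = gadget_fun G (map (\<lambda>i. x (h i)) [0..<card V])"
proof -
  obtain n G h where G: "wf_gadget \<F> n G" and h: "bij_betw h {0..<n} V"
    and f: "\<And>x. f x = gadget_fun G (map (\<lambda>i. x (h i)) [0..<n])"
    using assms unfolding realizable_on_def by blast
  moreover have "n = card V"
    using bij_betw_same_card[OF h] by simp
  ultimately show ?thesis using that by blast
qed

lemma twisted_real_multiple_arity0:
  assumes "realizable_on \<F> V f" "card V = 0"
  shows "twisted_real_multiple V f"
proof -
  obtain G h where h: "bij_betw h {0..<0} V" and f: "\<And>x. f x = gadget_fun G (map (\<lambda>i. x (h i)) [0..<0])"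
    using realizable_on_card[OF assms(1)] unfolding assms(2) by blast
  have "V = {}" using h by (simp add: bij_betw_def)
  show ?thesis
  proof (cases "gadget_fun G [] = 0")
    case True
    then show ?thesis using f by (simp add: twisted_real_multiple_zero)
  next
    case False
    then have "twisted_real V (\<lambda>x. f x / gadget_fun G [])"
      using f \<open>V = {}\<close> by (simp add: twisted_real_def flip_on_def weight_def)
    then show ?thesis using False unfolding twisted_real_multiple_def by blast
  qed
qed

context
  fixes \<F> :: "sig set"
  assumes finite_Bfrak: "finite (Bfrak \<F>)" and group_Bfrak: "group (mat_monoid (Bfrak \<F>))"
    and binary: "\<forall>A. realizable_bin \<F> A \<longrightarrow> (\<exists>c::complex. \<exists>B \<in> Bfrak \<F>. A = (\<lambda>u v. c * B u v))"
    and K_Bfrak: "Kset \<subseteq> Bfrak \<F>"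
    and arity4: "\<forall>f. realizable \<F> 4 f \<longrightarrow>
       (\<exists>\<mu>::complex. \<exists>A \<in> Bfrak \<F>. \<exists>B \<in> Bfrak \<F>. \<exists>\<sigma>. \<sigma> permutes {0..<4} \<and>
          (\<forall>x. length x = 4 \<longrightarrow> f x = \<mu> * A (x ! \<sigma> 0) (x ! \<sigma> 1) * B (x ! \<sigma> 2) (x ! \<sigma> 3)))"
begin

lemma quaternionic_Bfrak: "B \<in> Bfrak \<F> \<Longrightarrow> quaternionic B"
  using quaternionic_of_finite_group[OF finite_Bfrak group_Bfrak _ K_Bfrak] Bfrak_det by blast

lemma twisted_real_multiple_arity2:
  assumes "realizable_on \<F> V f" "card V = 2"
  shows "twisted_real_multiple V f"
proof -
  obtain G h where G: "wf_gadget \<F> 2 G" and h: "bij_betw h {0..<2} V"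
    and f: "\<And>x. f x = gadget_fun G (map (\<lambda>i. x (h i)) [0..<2])"
    using realizable_on_card[OF assms(1)] unfolding assms(2) by blast
  have "realizable_bin \<F> (\<lambda>u v. gadget_fun G [u, v])"
    unfolding realizable_bin_def realizable_def
  proof (intro exI[of _ G] conjI allI impI)
    fix xs :: "bool list" assume "length xs = 2"
    then have "[xs ! 0, xs ! 1] = xs" by (cases xs; cases "tl xs") auto
    then show "gadget_fun G [xs ! 0, xs ! 1] = gadget_fun G xs" by simp
  qed (rule G)
  then obtain c B where B: "B \<in> Bfrak \<F>" and cB: "(\<lambda>u v. gadget_fun G [u, v]) = (\<lambda>u v. c * B u v)"
    using binary by blast
  have "f x = c * (\<Prod>j<1. B (x (h (2 * j))) (x (h (2 * j + 1))))" for x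
    using fun_cong[OF fun_cong[OF cB, of "x (h 0)"], of "x (h 1)"] by (simp add: f upt_rec)
  then show ?thesis
    by (rule twisted_real_multiple_pairing_product[rotated 2]) (use h quaternionic_Bfrak[OF B] in simp_all)
qed

lemma twisted_real_multiple_arity4:
  assumes "realizable_on \<F> V f" "card V = 4"
  shows "twisted_real_multiple V f"
proof -
  obtain G h where G: "wf_gadget \<F> 4 G" and h: "bij_betw h {0..<4} V"
    and f: "\<And>x. f x = gadget_fun G (map (\<lambda>i. x (h i)) [0..<4])"
    using realizable_on_card[OF assms(1)] unfolding assms(2) by blast
  have "realizable \<F> 4 (gadget_fun G)"
    unfolding realizable_def using G by blast
  then obtain \<mu> A B \<sigma> where AB: "A \<in> Bfrak \<F>" "B \<in> Bfrak \<F>" and \<sigma>: "\<sigma> permutes {0..<4}"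
    and GAB: "\<And>xs. length xs = 4 \<Longrightarrow> gadget_fun G xs = \<mu> * A (xs ! \<sigma> 0) (xs ! \<sigma> 1) * B (xs ! \<sigma> 2) (xs ! \<sigma> 3)"
    using arity4 by blast
  let ?k = "\<lambda>j. if j = 0 then A else B"
  have h\<sigma>: "bij_betw (h \<circ> \<sigma>) {0..<2 * 2} V"
    using bij_betw_trans[OF permutes_imp_bij[OF \<sigma>] h] by simp
  have "\<sigma> i < 4" if "i < 4" for i
    using permutes_in_image[OF \<sigma>] that by simp
  then have "f x = \<mu> * A (x (h (\<sigma> 0))) (x (h (\<sigma> 1))) * B (x (h (\<sigma> 2))) (x (h (\<sigma> 3)))" for x
    using GAB[of "map (\<lambda>i. x (h i)) [0..<4]"] by (simp add: f)
  then have f_prod: "f x = \<mu> * (\<Prod>j<2. ?k j (x ((h \<circ> \<sigma>) (2 * j))) (x ((h \<circ> \<sigma>) (2 * j + 1))))" for x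
    by (simp add: numeral_eq_Suc mult.assoc)
  have "\<forall>j<2. quaternionic (?k j)"
    using AB quaternionic_Bfrak by simp
  then show ?thesis
    by (rule twisted_real_multiple_pairing_product[OF h\<sigma> _ f_prod])
qed

theorem realizable_twisted_real_multiple:
  assumes "realizable_on \<F> V f" "even (card V)"
  shows "twisted_real_multiple V f"
  using assms
proof (induction "card V" arbitrary: V f rule: less_induct)
  case less
  have "finite V"
    using realizable_on_card[OF less.prems(1)] by (metis bij_betw_finite finite_atLeastLessThan)
  show ?case
  proof (cases "5 \<le> card V")
    case False
    then have "card V = 0 \<or> card V = 2 \<or> card V = 4"
      using less.prems(2) by presburger
    then show ?thesis
      using twisted_real_multiple_arity0 twisted_real_multiple_arity2 twisted_real_multiple_arity4
        less.prems(1) by blast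
  next
    case True
    show ?thesis
    proof (rule twisted_real_multiple_of_contractions[OF \<open>finite V\<close> True])
      fix a b k assume ab: "a \<in> V" "b \<in> V" "a \<noteq> b" and "k \<in> Kset"
      then obtain A s where A: "realizable_bin \<F> A" "det2 A \<noteq> 0" "s\<^sup>2 = det2 A" and k: "k = (\<lambda>u v. A u v / s)"
        using K_Bfrak unfolding Bfrak_def by blast
      have "card (V - {a, b}) = card V - 2"
        using ab \<open>finite V\<close> by (simp add: card_Diff_subset)
      then have "twisted_real_multiple (V - {a, b}) (pair_contract a b A f)"
        using less.hyps realizable_on_contract[OF less.prems(1) ab A(1)] less.prems(2) True by simp
      then have "twisted_real_multiple (V - {a, b}) (\<lambda>x. (1 / s) * pair_contract a b A f x)"
        by (rule twisted_real_multiple_scale[rotated]) (use A in auto)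
      moreover have "pair_contract a b k f = (\<lambda>x. (1 / s) * pair_contract a b A f x)"
        by (simp add: k fun_eq_iff pair_contract_def add_divide_distrib)
      ultimately show "twisted_real_multiple (V - {a, b}) (pair_contract a b k f)" by simp
    qed
  qed
qed

end

section \<open>Contractions with \<^const>\<open>Kset\<close>\<close>

lemma sum_twisted_real_product_real:
  fixes n :: nat
  assumes F: "twisted_real {0..<n} (\<lambda>x. F (map x [0..<n]))" and P: "twisted_real {0..<n} P"
    and P_local: "\<And>x y. (\<And>i. i < n \<Longrightarrow> x i = y i) \<Longrightarrow> P x = P y"
  shows "(\<Sum>xs\<in>{xs. length xs = n}. F xs * P (\<lambda>i. xs ! i)) \<in> \<real>"
proof -
  let ?L = "{xs :: bool list. length xs = n}"
  have summand: "F (map Not xs) * P (\<lambda>i. map Not xs ! i) = cnj (F xs * P (\<lambda>i. xs ! i))"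
    if xs: "length xs = n" for xs
  proof -
    let ?y = "flip_on {0..<n} (\<lambda>i. xs ! i)" and ?w = "weight {0..<n} (\<lambda>i. xs ! i)"
    have map_y: "map ?y [0..<n] = map Not xs"
      using xs by (intro nth_equalityI) (auto simp: flip_on_def)
    have map_xs: "map (\<lambda>i. xs ! i) [0..<n] = xs"
      using xs map_nth[of xs] by simp
    have F_flip: "F (map Not xs) = (-1) ^ ?w * cnj (F xs)"
      using F[unfolded twisted_real_def, rule_format, of "\<lambda>i. xs ! i"] unfolding map_y map_xs .
    have "P (\<lambda>i. map Not xs ! i) = P ?y"
      using xs by (intro P_local) (simp add: flip_on_def)
    also have "\<dots> = (-1) ^ ?w * cnj (P (\<lambda>i. xs ! i))"
      using P[unfolded twisted_real_def, rule_format, of "\<lambda>i. xs ! i"] .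
    finally have P_flip: "P (\<lambda>i. map Not xs ! i) = (-1) ^ ?w * cnj (P (\<lambda>i. xs ! i))" .
    have "F (map Not xs) * P (\<lambda>i. map Not xs ! i) = ((-1) ^ ?w * (-1) ^ ?w) * cnj (F xs * P (\<lambda>i. xs ! i))"
      unfolding F_flip P_flip complex_cnj_mult by (simp only: mult_ac)
    moreover have "(-1 :: complex) ^ ?w * (-1) ^ ?w = 1"
      by (simp add: power_add[symmetric])
    ultimately show ?thesis by simp
  qed
  have "(\<Sum>xs\<in>?L. F xs * P (\<lambda>i. xs ! i)) = (\<Sum>xs\<in>?L. F (map Not xs) * P (\<lambda>i. map Not xs ! i))"
    by (rule sum.reindex_bij_witness[where i = "map Not" and j = "map Not"]) (auto simp: comp_def)
  also have "\<dots> = (\<Sum>xs\<in>?L. cnj (F xs * P (\<lambda>i. xs ! i)))"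
    by (rule sum.cong[OF refl], rule summand) simp
  also have "\<dots> = cnj (\<Sum>xs\<in>?L. F xs * P (\<lambda>i. xs ! i))"
    by simp
  finally show ?thesis by (metis Reals_cnj_iff)
qed

lemma Kcontract_real:
  assumes \<pi>: "ordered_pairing d \<pi>" and \<psi>: "\<forall>j<d. quaternionic (\<psi> j)"
    and F: "twisted_real {0..<2 * d} (\<lambda>x. F (map x [0..<2 * d]))"
  shows "Kcontract d \<pi> \<psi> F \<in> \<real>"
proof -
  let ?P = "\<lambda>x. \<Prod>j<d. \<psi> j (x (\<pi> (2 * j))) (x (\<pi> (2 * j + 1)))"
  have \<pi>_bij: "bij_betw \<pi> {0..<2 * d} {0..<2 * d}"
    using \<pi> unfolding ordered_pairing_def .
  have "\<pi> (2 * j) < 2 * d" "\<pi> (2 * j + 1) < 2 * d" if "j < d" for j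
    using \<pi>_bij that by (auto dest: bij_betwE)
  then have "?P x = ?P y" if "\<And>i. i < 2 * d \<Longrightarrow> x i = y i" for x y
    using that by (intro prod.cong) auto
  from sum_twisted_real_product_real[OF F twisted_real_pairing_product[OF \<pi>_bij \<psi>] this]
  show ?thesis unfolding Kcontract_def .
qed

theorem mainTheorem8:
  fixes \<F> :: "sig set" and d :: nat and G :: gadget
    and \<pi> \<pi>' :: "nat \<Rightarrow> nat" and \<psi> \<psi>' :: "nat \<Rightarrow> mat2"
  assumes finF: "finite \<F>"
    and alg: "\<forall>f \<in> \<F>. \<forall>x. length x = fst f \<longrightarrow> algebraic (snd f x)"
    and grp: "finite (Bfrak \<F>)" "group (mat_monoid (Bfrak \<F>))"
    and bin: "\<forall>A. realizable_bin \<F> A \<longrightarrow> (\<exists>c::complex. \<exists>B \<in> Bfrak \<F>. A = (\<lambda>u v. c * B u v))"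
    and K: "Kset \<subseteq> Bfrak \<F>"
    and ar4: "\<forall>f. realizable \<F> 4 f \<longrightarrow>
       (\<exists>\<mu>::complex. \<exists>A \<in> Bfrak \<F>. \<exists>B \<in> Bfrak \<F>. \<exists>\<sigma>. \<sigma> permutes {0..<4} \<and>
          (\<forall>x. length x = 4 \<longrightarrow>
             f x = \<mu> * A (x ! \<sigma> 0) (x ! \<sigma> 1) * B (x ! \<sigma> 2) (x ! \<sigma> 3)))"
    and G: "wf_gadget \<F> (2*d) G"
    and pi: "ordered_pairing d \<pi>" "ordered_pairing d \<pi>'"
    and psi: "\<forall>j<d. \<psi> j \<in> Kset" "\<forall>j<d. \<psi>' j \<in> Kset"
    and nz: "Kcontract d \<pi> \<psi> (gadget_fun G) \<noteq> 0"
  shows "Kcontract d \<pi>' \<psi>' (gadget_fun G) / Kcontract d \<pi> \<psi> (gadget_fun G) \<in> \<real>"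
proof -
  let ?V = "{0..<2 * d}" and ?f = "\<lambda>x. gadget_fun G (map x [0..<2 * d])"
  have "realizable_on \<F> ?V ?f"
    unfolding realizable_on_def using G by (intro exI[of _ "2 * d"] exI[of _ G] exI[of _ id]) auto
  then have "twisted_real_multiple ?V ?f"
    by (rule realizable_twisted_real_multiple[OF grp bin K ar4]) simp
  then obtain c where c: "c \<noteq> 0" "twisted_real ?V (\<lambda>x. gadget_fun G (map x [0..<2 * d]) / c)"
    unfolding twisted_real_multiple_def by blast
  have real: "Kcontract d p q (gadget_fun G) / c \<in> \<real>" if "ordered_pairing d p" "\<forall>j<d. q j \<in> Kset" for p q
  proof -
    have "Kcontract d p q (\<lambda>xs. gadget_fun G xs / c) \<in> \<real>"
      using Kcontract_real[OF that(1) _ c(2)] that(2) quaternionic_Kset by blast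
    then show ?thesis
      unfolding Kcontract_def by (simp add: sum_divide_distrib)
  qed
  have "(Kcontract d \<pi>' \<psi>' (gadget_fun G) / c) / (Kcontract d \<pi> \<psi> (gadget_fun G) / c) \<in> \<real>"
    using real[OF pi(2) psi(2)] real[OF pi(1) psi(1)] by (rule Reals_divide)
  moreover have "(Kcontract d \<pi>' \<psi>' (gadget_fun G) / c) / (Kcontract d \<pi> \<psi> (gadget_fun G) / c)
      = Kcontract d \<pi>' \<psi>' (gadget_fun G) / Kcontract d \<pi> \<psi> (gadget_fun G)"
    using c(1) by simp
  ultimately show ?thesis by (simp only:)
qed

end
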